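(* Let $E=B\times\Gamma$ be a compact graph bundle (with projection $p=\mathrm{pr}_1$) and $M\subseteq E$ a closed set with $\operatorname{End}(M)=\emptyset$. (a) If $U$ is an open ball in $B$ with $U\subseteq\mathcal R_B(M)$, then there are an open ball $V\subseteq U$ and a ramification point $q$ of $\Gamma$ such that $V\times\{q\}\subseteq\mathcal R_E(M)$. (b) Let $q$ be a ramification point of $\Gamma$ of order $N$ and $V$ an open ball in $B$ with $V\times\{q\}\subseteq\mathcal R_E(M)$. Let $\Sigma_N\subseteq\Gamma$ be an open $N$-star with central point $q$ which is an open neighbourhood of $q$ in $\Gamma$. Then there are a full sub-star $\Sigma_k$ of $\Sigma_N$ with $k\ge3$ and an open ball $W\subseteq V$ in $B$ such that $(W\times\Sigma_N)\cap M=W\times\Sigma_k$.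
   Context: $B$ compact metric, $\Gamma$ a graph (nonempty compact metric space that is a finite union of arcs pairwise disjoint or meeting only at end-points); ramification points of $\Gamma$ have order $\ge3$. $M_b=M\cap(\{b\}\times\Gamma)$. Open $n$-star $\Sigma_n$: the $n$-star $\{z\in\mathbb C:z^n\in[0,1]\}$ (or homeomorphic copy) minus its $n$ end-points. For a closed subset $Z$ of a graph, $x\in Z$ is an end-point of $Z$ unless some $Z$-open neighbourhood of $x$ is homeomorphic to $\Sigma_k$, $k\ge2$, with $x$ going to the centre; $\operatorname{End}(M)=\bigcup_b\operatorname{End}(M_b)$. A ramification point of a subset $G$ of a graph is a $g\in G$ with a $G$-open neighbourhood homeomorphic to an open $r$-star, $r\ge3$, with centre $g$. $\mathcal R_B(M)=\{b\in B:M_b\text{ has a ramification point}\}$, $\mathcal R_E(M)=\{\gamma\in E:\gamma\text{ is a ramification point of }M_{p(\gamma)}\}$. Full sub-star: for $N\ge n\ge2$, an open star $\Sigma_n\subseteq\Sigma_N$ with the same centre that is the union of $n$ of the $N$ half-closed branches of $\Sigma_N$. *)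

theory Defs
  imports "HOL-Analysis.Analysis"
begin

definition is_graph :: "'g::metric_space set \<Rightarrow> bool" where
  "is_graph \<Gamma> \<longleftrightarrow> \<Gamma> \<noteq> {} \<and> compact \<Gamma> \<and>
     (\<exists>A :: (real \<Rightarrow> 'g) set. finite A \<and> (\<forall>g\<in>A. arc g) \<and> \<Gamma> = \<Union>(path_image ` A) \<and>
        (\<forall>g\<in>A. \<forall>g'\<in>A. g \<noteq> g' \<longrightarrow>
           path_image g \<inter> path_image g' \<subseteq> {pathstart g, pathfinish g} \<inter> {pathstart g', pathfinish g'}))"

text \<open>The closed n-star in the complex plane, the open n-star (closed star minus its n end-points),
and its j-th half-closed branch (j < n).\<close>
definition closed_star :: "nat \<Rightarrow> complex set" where
  "closed_star n = {z. z ^ n \<in> complex_of_real ` {0..1}}"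

definition open_star :: "nat \<Rightarrow> complex set" where
  "open_star n = closed_star n - {z. z ^ n = 1}"

definition star_branch :: "nat \<Rightarrow> nat \<Rightarrow> complex set" where
  "star_branch n j = {complex_of_real t * exp (2 * of_real pi * \<i> * of_nat j / of_nat n) | t. 0 \<le> t \<and> t < 1}"

definition star_point :: "'g::topological_space set \<Rightarrow> nat \<Rightarrow> 'g \<Rightarrow> bool" where
  "star_point Z k x \<longleftrightarrow> (\<exists>U (f :: 'g \<Rightarrow> complex) g. openin (top_of_set Z) U \<and> x \<in> U \<and>
       homeomorphism U (open_star k) f g \<and> f x = 0)"

definition end_point :: "'g::topological_space set \<Rightarrow> 'g \<Rightarrow> bool" where
  "end_point Z x \<longleftrightarrow> x \<in> Z \<and> \<not> (\<exists>k\<ge>2. star_point Z k x)"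

definition ramification_point :: "'g::topological_space set \<Rightarrow> 'g \<Rightarrow> bool" where
  "ramification_point G x \<longleftrightarrow> x \<in> G \<and> (\<exists>r\<ge>3. star_point G r x)"

definition fibre :: "('b \<times> 'g) set \<Rightarrow> 'b \<Rightarrow> 'g set" where
  "fibre M b = {y. (b, y) \<in> M}"

definition End_set :: "'b set \<Rightarrow> ('b \<times> 'g::topological_space) set \<Rightarrow> ('b \<times> 'g) set" where
  "End_set B M = {(b, y). b \<in> B \<and> end_point (fibre M b) y}"

definition R_B :: "'b set \<Rightarrow> ('b \<times> 'g::topological_space) set \<Rightarrow> 'b set" where
  "R_B B M = {b \<in> B. \<exists>y. ramification_point (fibre M b) y}"

definition R_E :: "'b set \<Rightarrow> 'g set \<Rightarrow> ('b \<times> 'g::topological_space) set \<Rightarrow> ('b \<times> 'g) set" where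
  "R_E B \<Gamma> M = {(b, y) \<in> B \<times> \<Gamma>. ramification_point (fibre M b) y}"

definition open_ball_in :: "'a::metric_space set \<Rightarrow> 'a set \<Rightarrow> bool" where
  "open_ball_in B V \<longleftrightarrow> (\<exists>c r. c \<in> B \<and> r > 0 \<and> V = ball c r \<inter> B)"

end

theory Submission
  imports Defs
begin

text \<open>A star chart identifies a neighbourhood of a point \<open>q\<close> of the graph \<open>\<Gamma>\<close> with an open
  \<open>N\<close>-star. The order of a star point is invariant: a continuous injection of an \<open>r\<close>-star into a
  star, centre to centre, sends its legs into distinct branches. A closed set \<open>Z \<subseteq> \<Gamma>\<close> without end
  points cannot stop inside a branch, since each of its points is the centre of a star of order
  at least two, which covers a neighbourhood of the point in the branch; by connectedness, \<open>Z\<close>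
  meets the chart in a full sub-star, and \<open>q\<close> is a ramification point of \<open>Z\<close> iff at least three
  branches lie in \<open>Z\<close>. Applied to the fibres of \<open>M\<close>, the set of parameters \<open>b\<close> over which a given
  branch lies in \<open>M\<^sub>b\<close> is closed. For (a), the finitely many ramification points of \<open>\<Gamma>\<close> give a
  finite closed cover of \<open>U\<close>, one member of which has interior in \<open>U\<close>; for (b), a function with
  finitely many possible values and closed level conditions is constant on a smaller ball.\<close>

section \<open>Geometry of the standard open star\<close>

definition star_dir :: "nat \<Rightarrow> nat \<Rightarrow> complex" where
  "star_dir n j = exp (2 * of_real pi * \<i> * of_nat j / of_nat n)"

lemma norm_star_dir [simp]: "norm (star_dir n j) = 1"
  unfolding star_dir_def by (simp add: norm_exp_eq_Re)

lemma star_dir_nonzero [simp]: "star_dir n j \<noteq> 0"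
  unfolding star_dir_def by simp

lemma star_dir_inj: "\<lbrakk>i < n; j < n; star_dir n i = star_dir n j\<rbrakk> \<Longrightarrow> i = j"
  unfolding star_dir_def using complex_root_unity_eq by auto

lemma star_dir_power: "n \<noteq> 0 \<Longrightarrow> star_dir n j ^ n = 1"
  unfolding star_dir_def by (rule complex_root_unity)

lemma scaled_star_dir_eq:
  assumes "i < n" "j < n" "0 < s" "0 \<le> t" "of_real s * star_dir n i = of_real t * star_dir n j"
  shows "s = t \<and> i = j"
proof -
  have "norm (of_real s * star_dir n i) = norm (of_real t * star_dir n j)"
    using assms(5) by simp
  then have "s = t" using assms(3,4) by (simp add: norm_mult)
  with assms show ?thesis using star_dir_inj by auto
qed

lemma star_branch_eq: "star_branch n j = (\<lambda>t. of_real t * star_dir n j) ` {0..<1}"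
  unfolding star_branch_def star_dir_def by auto

definition half_line :: "nat \<Rightarrow> nat \<Rightarrow> complex set" where
  "half_line n j = {of_real t * star_dir n j | t. 0 \<le> t}"

lemma mem_half_line_iff: "w \<in> half_line n j \<longleftrightarrow> w = of_real (norm w) * star_dir n j"
proof
  assume "w \<in> half_line n j"
  then show "w = of_real (norm w) * star_dir n j" by (auto simp: half_line_def norm_mult)
next
  assume w: "w = of_real (norm w) * star_dir n j"
  have "0 \<le> norm w" by simp
  with w show "w \<in> half_line n j" unfolding half_line_def by blast
qed

lemma half_line_eq_if_norm_eq:
  fixes n j :: nat
  assumes "w \<in> half_line n j" "w' \<in> half_line n j" "norm w = norm w'"
  shows "w = w'"
proof -
  have "w = of_real (norm w) * star_dir n j" "w' = of_real (norm w') * star_dir n j"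
    using assms(1,2) unfolding mem_half_line_iff .
  with assms(3) show ?thesis by metis
qed

lemma star_branch_subset_half_line: "star_branch n j \<subseteq> half_line n j"
  unfolding star_branch_eq half_line_def by auto

lemma zero_in_star_branch: "0 \<in> star_branch n j"
  unfolding star_branch_eq by (intro image_eqI[of _ _ 0]) auto

lemma open_star_eq:
  assumes "1 \<le> n"
  shows "open_star n = {of_real t * star_dir n j | t j. 0 \<le> t \<and> t < 1 \<and> j < n}"
proof
  show "{of_real t * star_dir n j | t j. 0 \<le> t \<and> t < 1 \<and> j < n} \<subseteq> open_star n"
  proof clarify
    fix t :: real and j assume t: "0 \<le> t" "t < 1" "j < n"
    have "(of_real t * star_dir n j) ^ n = of_real (t ^ n)"
      using assms by (simp add: power_mult_distrib star_dir_power)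
    moreover have "0 \<le> t ^ n" "t ^ n < 1"
      using t assms by (simp_all add: power_less_one_iff)
    ultimately show "of_real t * star_dir n j \<in> open_star n"
      unfolding open_star_def closed_star_def by (auto simp del: of_real_power)
  qed
next
  show "open_star n \<subseteq> {of_real t * star_dir n j | t j. 0 \<le> t \<and> t < 1 \<and> j < n}"
  proof
    fix z assume "z \<in> open_star n"
    then obtain c where c: "z ^ n = of_real c" "0 \<le> c" "c < 1"
      unfolding open_star_def closed_star_def by force
    show "z \<in> {of_real t * star_dir n j | t j. 0 \<le> t \<and> t < 1 \<and> j < n}"
    proof (cases "z = 0")
      case True
      with assms show ?thesis by (intro CollectI exI[of _ 0]) auto
    next
      case False
      define t where "t = norm z"
      have t: "0 < t" using False by (simp add: t_def)
      have "t ^ n = norm (z ^ n)" by (simp add: t_def norm_power)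
      then have tc: "t ^ n = c" using c by simp
      then have "t < 1" using t c by (metis not_less one_le_power)
      have "of_real t ^ n = (of_real c :: complex)" using tc by (metis of_real_power)
      moreover have "c \<noteq> 0" using tc t by auto
      ultimately have "(z / of_real t) ^ n = 1"
        using c by (simp add: power_divide)
      then obtain j where j: "j < n" "z / of_real t = star_dir n j"
        using complex_roots_unity[OF assms] unfolding star_dir_def by auto
      have "z = of_real t * star_dir n j" using t j(2) by (simp add: field_simps)
      with j(1) t \<open>t < 1\<close> show ?thesis by (intro CollectI exI[of _ t] exI[of _ j]) auto
    qed
  qed
qed

lemma scaled_star_dir_in_open_star:
  "\<lbrakk>0 \<le> t; t < 1; j < n\<rbrakk> \<Longrightarrow> of_real t * star_dir n j \<in> open_star n"
  by (subst open_star_eq) auto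

lemma zero_in_open_star: "1 \<le> n \<Longrightarrow> 0 \<in> open_star n"
  using scaled_star_dir_in_open_star[of 0 0 n] by simp

lemma star_branch_subset_open_star: "j < n \<Longrightarrow> star_branch n j \<subseteq> open_star n"
  unfolding star_branch_eq using scaled_star_dir_in_open_star by auto

lemma open_star_eq_Union_star_branch:
  assumes "1 \<le> n"
  shows "open_star n = (\<Union>j<n. star_branch n j)"
proof
  show "open_star n \<subseteq> (\<Union>j<n. star_branch n j)"
    unfolding open_star_eq[OF assms] star_branch_eq by auto
  show "(\<Union>j<n. star_branch n j) \<subseteq> open_star n"
    using star_branch_subset_open_star by blast
qed

definition open_ray :: "nat \<Rightarrow> nat \<Rightarrow> complex set" where
  "open_ray n j = {of_real t * star_dir n j | t. 0 < t \<and> t < 1}"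

lemma open_ray_subset_half_line: "open_ray n j \<subseteq> half_line n j"
  by (auto simp: open_ray_def half_line_def)

lemma openin_open_ray:
  assumes "j < n"
  shows "openin (top_of_set (open_star n)) (open_ray n j)"
proof -
  define K where "K = {0} \<union> (\<Union>i\<in>{..<n}-{j}. (\<lambda>t. of_real t * star_dir n i) ` {0..1})"
  have "compact ((\<lambda>t. of_real t * star_dir n i) ` {0..1})" for i
    by (intro compact_continuous_image continuous_intros) auto
  then have "closed K"
    unfolding K_def by (intro closed_Un closed_UN compact_imp_closed) auto
  moreover have "open_ray n j = open_star n \<inter> - K"
  proof
    show "open_ray n j \<subseteq> open_star n \<inter> - K"
    proof
      fix w assume "w \<in> open_ray n j"
      then obtain t where t: "0 < t" "t < 1" "w = of_real t * star_dir n j"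
        unfolding open_ray_def by auto
      have "w \<notin> (\<lambda>t. of_real t * star_dir n i) ` {0..1}" if "i \<in> {..<n} - {j}" for i
        using t that assms scaled_star_dir_eq[of j n i t] by auto
      then show "w \<in> open_star n \<inter> - K"
        using t assms scaled_star_dir_in_open_star[of t j n] by (auto simp: K_def)
    qed
    show "open_star n \<inter> - K \<subseteq> open_ray n j"
    proof
      fix w assume w: "w \<in> open_star n \<inter> - K"
      then obtain t i where ti: "0 \<le> t" "t < 1" "i < n" "w = of_real t * star_dir n i"
        using open_star_eq[of n] assms by auto
      have "w \<noteq> 0" using w by (auto simp: K_def)
      then have "t \<noteq> 0" using ti by auto
      moreover have "i = j"
      proof (rule ccontr)
        assume "i \<noteq> j"
        then have "w \<in> K" using ti unfolding K_def by (intro UnI2 UN_I[of i]) auto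
        then show False using w by blast
      qed
      ultimately show "w \<in> open_ray n j" using ti by (auto simp: open_ray_def)
    qed
  qed
  ultimately show ?thesis by (simp add: openin_open_Int open_Compl)
qed

section \<open>Open stars built from arcs\<close>

text \<open>The branch through a point of the star; at the centre it is an arbitrary branch.\<close>

definition star_index :: "nat \<Rightarrow> complex \<Rightarrow> nat" where
  "star_index n z = (SOME i. i < n \<and> z = of_real (norm z) * star_dir n i)"

definition star_glue :: "nat \<Rightarrow> (nat \<Rightarrow> real \<Rightarrow> 'a) \<Rightarrow> complex \<Rightarrow> 'a" where
  "star_glue n \<gamma> z = \<gamma> (star_index n z) (norm z)"

lemma star_index_scaled:
  assumes "i < n" "0 < t"
  shows "star_index n (of_real t * star_dir n i) = i"
proof -
  let ?z = "of_real t * star_dir n i"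
  have "\<exists>i'. i' < n \<and> ?z = of_real (norm ?z) * star_dir n i'"
    using assms by (intro exI[of _ i]) (simp add: norm_mult)
  then have "star_index n ?z < n \<and> ?z = of_real (norm ?z) * star_dir n (star_index n ?z)"
    unfolding star_index_def by (rule someI_ex)
  then show ?thesis
    using scaled_star_dir_eq[OF assms(1) _ assms(2), of "star_index n ?z" "norm ?z"] assms
    by (simp add: norm_mult)
qed

lemma star_index_zero:
  assumes "1 \<le> n"
  shows "star_index n 0 < n"
proof -
  have "\<exists>i. i < n \<and> (0::complex) = of_real (norm (0::complex)) * star_dir n i"
    using assms by (intro exI[of _ 0]) simp
  then show ?thesis unfolding star_index_def by (metis (mono_tags, lifting) someI_ex)
qed

lemma star_glue_scaled:
  assumes "i < n" "0 \<le> t" and start: "\<And>i. i < n \<Longrightarrow> \<gamma> i 0 = p"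
  shows "star_glue n \<gamma> (of_real t * star_dir n i) = \<gamma> i t"
proof (cases "t = 0")
  case True
  with assms show ?thesis using star_index_zero[of n] by (simp add: star_glue_def)
next
  case False
  with assms show ?thesis by (simp add: star_glue_def star_index_scaled norm_mult)
qed

text \<open>The gluing map is defined on the compact closed star, which gives continuity of the inverse.\<close>

lemma homeomorphism_open_star_Union_arcs:
  fixes \<gamma> :: "nat \<Rightarrow> real \<Rightarrow> 'a::metric_space"
  assumes d: "1 \<le> d"
    and cont: "\<And>i. i < d \<Longrightarrow> continuous_on {0..1} (\<gamma> i)"
    and inj: "\<And>i. i < d \<Longrightarrow> inj_on (\<gamma> i) {0..1}"
    and start: "\<And>i. i < d \<Longrightarrow> \<gamma> i 0 = p"
    and disj: "\<And>i k s t. \<lbrakk>i < d; k < d; i \<noteq> k; s \<in> {0..1}; t \<in> {0..1}; \<gamma> i s = \<gamma> k t\<rbrakk> \<Longrightarrow> s = 0"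
  shows "\<exists>\<Phi> \<Psi>. homeomorphism (open_star d) (\<Union>i<d. \<gamma> i ` {0..<1}) \<Phi> \<Psi> \<and> \<Phi> 0 = p"
proof -
  define seg where "seg i = (\<lambda>t. of_real t * star_dir d i) ` {0..1}" for i
  define P where "P = (\<Union>i<d. seg i)"
  define \<Phi> where "\<Phi> = star_glue d \<gamma>"
  have \<Phi>_seg: "\<Phi> (of_real t * star_dir d i) = \<gamma> i t" if "i < d" "t \<in> {0..1}" for i t
    using star_glue_scaled[of i d t \<gamma> p] that start by (simp add: \<Phi>_def)
  have compact_seg: "compact (seg i)" for i
    unfolding seg_def by (intro compact_continuous_image continuous_intros) auto
  have "continuous_on (seg i) \<Phi>" if "i < d" for i
  proof -
    have "continuous_on (seg i) (\<lambda>z. \<gamma> i (norm z))"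
      by (rule continuous_on_compose2[OF cont[OF that] continuous_on_norm_id])
         (auto simp: seg_def norm_mult)
    then show ?thesis
      by (rule continuous_on_cong[THEN iffD1, rotated 2]) (auto simp: seg_def \<Phi>_seg that norm_mult)
  qed
  then have "continuous_on P \<Phi>"
    unfolding P_def
    by (intro continuous_on_closed_Union) (auto intro: compact_imp_closed compact_seg)
  moreover have "inj_on \<Phi> P"
  proof (rule inj_onI)
    fix z w assume "z \<in> P" "w \<in> P" and eq: "\<Phi> z = \<Phi> w"
    then obtain i k s t where z: "i < d" "s \<in> {0..1}" "z = of_real s * star_dir d i"
      and w: "k < d" "t \<in> {0..1}" "w = of_real t * star_dir d k"
      unfolding P_def seg_def by auto
    have \<gamma>: "\<gamma> i s = \<gamma> k t" using eq z w \<Phi>_seg by simp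
    show "z = w"
    proof (cases "i = k")
      case True
      with \<gamma> z w inj show ?thesis by (metis inj_onD)
    next
      case False
      then have "s = 0" "t = 0"
        using \<gamma> disj[OF z(1) w(1) _ z(2) w(2)] disj[OF w(1) z(1) _ w(2) z(2)] by auto
      with z w show ?thesis by simp
    qed
  qed
  moreover have "compact P" unfolding P_def using compact_seg by auto
  ultimately obtain \<Psi> where hom: "homeomorphism P (\<Phi> ` P) \<Phi> \<Psi>"
    using homeomorphism_compact by blast
  have sub: "open_star d \<subseteq> P"
    unfolding open_star_eq[OF d] P_def seg_def by auto
  have img: "\<Phi> ` open_star d = (\<Union>i<d. \<gamma> i ` {0..<1})"
  proof
    show "\<Phi> ` open_star d \<subseteq> (\<Union>i<d. \<gamma> i ` {0..<1})"
      unfolding open_star_eq[OF d] using \<Phi>_seg by auto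
    show "(\<Union>i<d. \<gamma> i ` {0..<1}) \<subseteq> \<Phi> ` open_star d"
    proof clarify
      fix i t assume "i < d" "t \<in> {0..<(1::real)}"
      then show "\<gamma> i t \<in> \<Phi> ` open_star d"
        using \<Phi>_seg[of i t] scaled_star_dir_in_open_star[of t i d] by (metis atLeastLessThan_iff
            atLeastAtMost_iff image_eqI less_imp_le)
    qed
  qed
  have "homeomorphism (open_star d) (\<Union>i<d. \<gamma> i ` {0..<1}) \<Phi> \<Psi>"
    by (rule homeomorphism_of_subsets[OF hom sub _ img]) (use img sub in auto)
  moreover have "\<Phi> 0 = p" using \<Phi>_seg[of 0 0] start[of 0] d by simp
  ultimately show ?thesis by blast
qed

lemma homeomorphism_open_star_Union_star_branch:
  assumes J: "J \<subseteq> {..<N}" "1 \<le> card J"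
  shows "\<exists>\<Phi> \<Psi>. homeomorphism (open_star (card J)) (\<Union>j\<in>J. star_branch N j) \<Phi> \<Psi> \<and> \<Phi> 0 = 0"
proof -
  let ?k = "card J"
  have "finite J" using J(1) finite_subset by blast
  then obtain \<sigma> where \<sigma>: "bij_betw \<sigma> {..<?k} J"
    by (metis bij_betw_from_nat_into_finite lessThan_atLeast0)
  then have \<sigma>N: "\<sigma> i < N" if "i < ?k" for i using J(1) that by (auto simp: bij_betw_def)
  define \<gamma> where "\<gamma> i t = of_real t * star_dir N (\<sigma> i)" for i t
  have "\<exists>\<Phi> \<Psi>. homeomorphism (open_star ?k) (\<Union>i<?k. \<gamma> i ` {0..<1}) \<Phi> \<Psi> \<and> \<Phi> 0 = 0"
  proof (rule homeomorphism_open_star_Union_arcs[OF J(2)])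
    show "continuous_on {0..1} (\<gamma> i)" for i unfolding \<gamma>_def by (intro continuous_intros)
    show "inj_on (\<gamma> i) {0..1}" for i unfolding \<gamma>_def by (rule inj_onI) simp
    show "\<gamma> i 0 = 0" for i unfolding \<gamma>_def by simp
    show "s = 0" if "i < ?k" "i' < ?k" "i \<noteq> i'" "s \<in> {0..1}" "t \<in> {0..1}" "\<gamma> i s = \<gamma> i' t"
      for i i' s t
    proof (rule ccontr)
      assume "s \<noteq> 0"
      with that have "\<sigma> i = \<sigma> i'"
        using scaled_star_dir_eq[OF \<sigma>N \<sigma>N, of i i' s t] unfolding \<gamma>_def by auto
      with that \<sigma> show False by (auto simp: bij_betw_def inj_on_def)
    qed
  qed
  moreover have "(\<Union>i<?k. \<gamma> i ` {0..<1}) = (\<Union>i<?k. star_branch N (\<sigma> i))"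
    unfolding \<gamma>_def star_branch_eq by auto
  moreover have "\<dots> = (\<Union>j\<in>J. star_branch N j)"
    using \<sigma> by (metis bij_betw_imp_surj_on image_image)
  ultimately show ?thesis by simp
qed

section \<open>Embeddings of stars into stars\<close>

lemma open_star_legs:
  assumes U: "openin (top_of_set (open_star r)) U" "0 \<in> U"
    and f: "continuous_on U f" "inj_on f U"
  obtains \<epsilon> where "0 < \<epsilon>" "\<And>i s. \<lbrakk>i < r; s \<in> {0..\<epsilon>}\<rbrakk> \<Longrightarrow> of_real s * star_dir r i \<in> U"
    "\<And>i. i < r \<Longrightarrow> continuous_on {0..\<epsilon>} (\<lambda>s. f (of_real s * star_dir r i))"
    "\<And>i k s t. \<lbrakk>i < r; k < r; s \<in> {0..\<epsilon>}; t \<in> {0..\<epsilon>};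
       f (of_real s * star_dir r i) = f (of_real t * star_dir r k)\<rbrakk>
       \<Longrightarrow> of_real s * star_dir r i = of_real t * star_dir r k"
proof -
  obtain e where e: "e > 0" "ball 0 e \<inter> open_star r \<subseteq> U"
    using U openin_contains_ball by metis
  define \<epsilon> where "\<epsilon> = min (e/2) (1/2)"
  have leg: "of_real s * star_dir r i \<in> U" if "i < r" "s \<in> {0..\<epsilon>}" for i s
  proof -
    have "of_real s * star_dir r i \<in> open_star r"
      using that by (intro scaled_star_dir_in_open_star) (auto simp: \<epsilon>_def)
    moreover have "of_real s * star_dir r i \<in> ball 0 e"
      using that e unfolding \<epsilon>_def by (auto simp: norm_mult)
    ultimately show ?thesis using e by blast
  qed
  show ?thesis
  proof (rule that)
    show "0 < \<epsilon>" using e by (simp add: \<epsilon>_def)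
    show "of_real s * star_dir r i \<in> U" if "i < r" "s \<in> {0..\<epsilon>}" for i s
      using leg that .
    show "continuous_on {0..\<epsilon>} (\<lambda>s. f (of_real s * star_dir r i))" if "i < r" for i
      by (rule continuous_on_compose2[OF f(1), of _ "\<lambda>s. of_real s * star_dir r i"])
         (intro continuous_intros, use leg[OF that] in blast)
    show "of_real s * star_dir r i = of_real t * star_dir r k"
      if "i < r" "k < r" "s \<in> {0..\<epsilon>}" "t \<in> {0..\<epsilon>}"
        "f (of_real s * star_dir r i) = f (of_real t * star_dir r k)" for i k s t
      using inj_onD[OF f(2) that(5) leg leg] that by blast
  qed
qed

lemma continuous_in_star_branches_half_line:
  assumes S: "connected S" "S \<noteq> {}" and J: "finite J"
    and F: "continuous_on S F" "\<And>s. s \<in> S \<Longrightarrow> F s \<noteq> 0" "F ` S \<subseteq> (\<Union>j\<in>J. star_branch N j)"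
  shows "\<exists>j\<in>J. F ` S \<subseteq> half_line N j"
proof -
  define D where "D s = F s / of_real (norm (F s))" for s
  have Dj: "\<exists>j\<in>J. D s = star_dir N j" if "s \<in> S" for s
  proof -
    have "F s \<in> (\<Union>j\<in>J. star_branch N j)" using F(3) that by blast
    then obtain j where j: "j \<in> J" "F s \<in> half_line N j"
      using star_branch_subset_half_line by blast
    define c where "c = norm (F s)"
    have "c \<noteq> 0" using F(2)[OF that] by (simp add: c_def)
    moreover have "F s = of_real c * star_dir N j"
      using j(2) unfolding c_def mem_half_line_iff .
    ultimately have "D s = star_dir N j" unfolding D_def c_def[symmetric] by simp
    with j show ?thesis by blast
  qed
  have "D ` S \<subseteq> star_dir N ` J" using Dj by auto
  then have "finite (D ` S)" using J finite_subset by blast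
  moreover have "continuous_on S D"
    unfolding D_def using F(2) by (intro continuous_intros F(1)) auto
  ultimately have "D constant_on S" using continuous_finite_range_constant[OF S(1)] by blast
  then obtain c where c: "\<And>s. s \<in> S \<Longrightarrow> D s = c" unfolding constant_on_def by blast
  obtain s0 where "s0 \<in> S" using S by blast
  then obtain j where j: "j \<in> J" "D s0 = star_dir N j" using Dj by blast
  have "F s \<in> half_line N j" if "s \<in> S" for s
  proof -
    have "D s = star_dir N j" using c[OF that] c[OF \<open>s0 \<in> S\<close>] j(2) by simp
    moreover have "F s = of_real (norm (F s)) * D s" using F(2)[OF that] by (simp add: D_def)
    ultimately show ?thesis
      unfolding mem_half_line_iff by (rule subst[where P = "\<lambda>d. F s = of_real (norm (F s)) * d"])
  qed
  with j(1) show ?thesis by blast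
qed

lemma injective_path_in_half_line:
  fixes e :: real
  assumes F: "continuous_on {0..e} F" "inj_on F {0..e}" "0 < e" "F ` {0..e} \<subseteq> half_line N j"
  shows "(\<lambda>s. norm (F s)) ` {0..e} = closed_segment (norm (F 0)) (norm (F e))"
    and "norm (F e) \<noteq> norm (F 0)"
proof -
  have inj: "inj_on (\<lambda>s. norm (F s)) {0..e}"
  proof (rule inj_onI)
    fix s t assume st: "s \<in> {0..e}" "t \<in> {0..e}" "norm (F s) = norm (F t)"
    then have "F s = F t" using F(4) by (intro half_line_eq_if_norm_eq) auto
    then show "s = t" using inj_onD[OF F(2)] st by blast
  qed
  have "continuous_on {0..e} (\<lambda>s. norm (F s))" using F(1) by (intro continuous_intros)
  then show "(\<lambda>s. norm (F s)) ` {0..e} = closed_segment (norm (F 0)) (norm (F e))"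
    using continuous_injective_image_segment_1[of 0 e "\<lambda>s. norm (F s)"] inj F(3)
    unfolding closed_segment_eq_real_ivl by simp
  show "norm (F e) \<noteq> norm (F 0)" using inj_onD[OF inj, of e 0] F(3) by auto
qed

lemma injective_path_in_star_branches:
  fixes F :: "real \<Rightarrow> complex" and e :: real
  assumes J: "finite J" and F: "0 < e" "continuous_on {0..e} F" "inj_on F {0..e}" "F 0 = 0"
    "F ` {0..e} \<subseteq> (\<Union>j\<in>J. star_branch N j)"
  shows "\<exists>j\<in>J. F ` {0..e} \<subseteq> half_line N j"
proof -
  have "continuous_on {0<..e} F" by (rule continuous_on_subset[OF F(2)]) auto
  moreover have "F s \<noteq> 0" if "s \<in> {0<..e}" for s
    using inj_onD[OF F(3), of s 0] F(4) that by auto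
  moreover have "F ` {0<..e} \<subseteq> F ` {0..e}" by (rule image_mono) auto
  then have "F ` {0<..e} \<subseteq> (\<Union>j\<in>J. star_branch N j)" using F(5) by (rule order_trans)
  moreover have "connected {0<..e}" "{0<..e} \<noteq> {}" using F(1) by auto
  ultimately obtain j where j: "j \<in> J" "F ` {0<..e} \<subseteq> half_line N j"
    using continuous_in_star_branches_half_line[OF _ _ J] by blast
  have "F s \<in> half_line N j" if "s \<in> {0..e}" for s
  proof (cases "s = 0")
    case True
    then show ?thesis by (simp add: F(4) mem_half_line_iff)
  next
    case False
    with that have "s \<in> {0<..e}" by auto
    with j(2) show ?thesis by blast
  qed
  with j(1) show ?thesis by blast
qed

text \<open>Each leg of the small star is an injective path from the centre, so it stays in a single
  branch of the big star, and two legs cannot share a branch.\<close>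

lemma open_star_embedding_card_le:
  assumes J: "J \<subseteq> {..<N}"
    and U: "openin (top_of_set (open_star r)) U" "0 \<in> U"
    and f: "continuous_on U f" "inj_on f U" "f 0 = 0" "f ` U \<subseteq> (\<Union>j\<in>J. star_branch N j)"
  shows "r \<le> card J"
proof -
  have "finite J" using J finite_subset by blast
  obtain \<epsilon> where \<epsilon>: "0 < \<epsilon>" "\<And>i s. \<lbrakk>i < r; s \<in> {0..\<epsilon>}\<rbrakk> \<Longrightarrow> of_real s * star_dir r i \<in> U"
    and cont: "\<And>i. i < r \<Longrightarrow> continuous_on {0..\<epsilon>} (\<lambda>s. f (of_real s * star_dir r i))"
    and inj: "\<And>i k s t. \<lbrakk>i < r; k < r; s \<in> {0..\<epsilon>}; t \<in> {0..\<epsilon>};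
        f (of_real s * star_dir r i) = f (of_real t * star_dir r k)\<rbrakk>
        \<Longrightarrow> of_real s * star_dir r i = of_real t * star_dir r k"
    using open_star_legs[OF U f(1,2)] by blast
  define F where "F i s = f (of_real s * star_dir r i)" for i s
  have F0: "F i 0 = 0" for i using f(3) by (simp add: F_def)
  have F_cont: "continuous_on {0..\<epsilon>} (F i)" if "i < r" for i
    using cont[OF that] by (simp add: F_def)
  have F_inj: "inj_on (F i) {0..\<epsilon>}" if "i < r" for i
    using inj[OF that that] by (auto simp: F_def inj_on_def)
  have "\<exists>j\<in>J. F i ` {0..\<epsilon>} \<subseteq> half_line N j" if i: "i < r" for i
  proof (rule injective_path_in_star_branches[OF \<open>finite J\<close> \<epsilon>(1) F_cont[OF i] F_inj[OF i] F0])
    show "F i ` {0..\<epsilon>} \<subseteq> (\<Union>j\<in>J. star_branch N j)"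
    proof (rule image_subsetI)
      fix s assume "s \<in> {0..\<epsilon>}"
      then show "F i s \<in> (\<Union>j\<in>J. star_branch N j)" using f(4) \<epsilon>(2)[OF i] unfolding F_def by blast
    qed
  qed
  then have "\<forall>i\<in>{..<r}. \<exists>j. j \<in> J \<and> F i ` {0..\<epsilon>} \<subseteq> half_line N j" by blast
  from bchoice[OF this] obtain jj
    where "\<forall>i\<in>{..<r}. jj i \<in> J \<and> F i ` {0..\<epsilon>} \<subseteq> half_line N (jj i)"
    by blast
  then have jj: "\<And>i. i < r \<Longrightarrow> jj i \<in> J"
    and half: "\<And>i. i < r \<Longrightarrow> F i ` {0..\<epsilon>} \<subseteq> half_line N (jj i)"
    by auto
  have seg: "(\<lambda>s. norm (F i s)) ` {0..\<epsilon>} = {0..norm (F i \<epsilon>)}" "0 < norm (F i \<epsilon>)"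
    if "i < r" for i
    using injective_path_in_half_line[OF F_cont[OF that] F_inj[OF that] \<epsilon>(1) half[OF that]]
    by (simp_all add: F0 closed_segment_eq_real_ivl)
  have "inj_on jj {..<r}"
  proof (rule inj_onI, rule ccontr)
    fix i k assume "i \<in> {..<r}" "k \<in> {..<r}" and same: "jj i = jj k" and "i \<noteq> k"
    then have ik: "i < r" "k < r" "i \<noteq> k" by auto
    define a where "a = norm (F i \<epsilon>)"
    define b where "b = norm (F k \<epsilon>)"
    have "0 < a" "0 < b" unfolding a_def b_def by (fact seg(2)[OF ik(1)] seg(2)[OF ik(2)])+
    define m where "m = min a b / 2"
    have "0 < m" "m \<le> norm (F i \<epsilon>)" "m \<le> norm (F k \<epsilon>)"
      using \<open>0 < a\<close> \<open>0 < b\<close> unfolding m_def a_def[symmetric] b_def[symmetric] by auto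
    then have "m \<in> (\<lambda>s. norm (F i s)) ` {0..\<epsilon>}" "m \<in> (\<lambda>s. norm (F k s)) ` {0..\<epsilon>}"
      unfolding seg(1)[OF ik(1)] seg(1)[OF ik(2)] by auto
    then obtain s t where st: "s \<in> {0..\<epsilon>}" "t \<in> {0..\<epsilon>}" "norm (F i s) = m" "norm (F k t) = m"
      by (auto elim!: imageE)
    have on_line: "F i s \<in> half_line N (jj i)" "F k t \<in> half_line N (jj i)"
      using half[OF ik(1)] half[OF ik(2)] same st(1,2) by auto
    have "F i s = F k t" by (rule half_line_eq_if_norm_eq[OF on_line]) (use st(3,4) in simp)
    then have "of_real s * star_dir r i = of_real t * star_dir r k"
      unfolding F_def by (rule inj[OF ik(1,2) st(1,2)])
    moreover have "s > 0" using st F0 \<open>0 < m\<close> by (cases "s = 0") auto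
    ultimately show False using scaled_star_dir_eq[of i r k s t] ik st by auto
  qed
  moreover have "jj ` {..<r} \<subseteq> J" using jj by blast
  ultimately show "r \<le> card J"
    using card_inj_on_le[of jj "{..<r}" J] \<open>finite J\<close> by simp
qed

lemma closed_segments_cover_nbhd:
  fixes t0 a b :: real
  assumes "a \<noteq> t0" "b \<noteq> t0"
    and common: "\<And>m. \<lbrakk>m \<in> closed_segment t0 a; m \<in> closed_segment t0 b\<rbrakk> \<Longrightarrow> m = t0"
  obtains \<delta> where "\<delta> > 0" "\<And>t. \<bar>t - t0\<bar> < \<delta> \<Longrightarrow> t \<in> closed_segment t0 a \<or> t \<in> closed_segment t0 b"
proof -
  have opposite: "(a < t0 \<and> t0 < b) \<or> (b < t0 \<and> t0 < a)"
  proof (rule ccontr)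
    assume "\<not> ?thesis"
    then have "(t0 < a \<and> t0 < b) \<or> (a < t0 \<and> b < t0)" using assms(1,2) by linarith
    then obtain m where "m \<noteq> t0" "m \<in> closed_segment t0 a" "m \<in> closed_segment t0 b"
    proof (elim disjE)
      assume "t0 < a \<and> t0 < b"
      then show thesis by (intro that[of "(t0 + min a b) / 2"]) (auto simp: closed_segment_eq_real_ivl)
    next
      assume "a < t0 \<and> b < t0"
      then show thesis by (intro that[of "(t0 + max a b) / 2"]) (auto simp: closed_segment_eq_real_ivl)
    qed
    then show False using common by blast
  qed
  show ?thesis
  proof (rule that)
    show "min \<bar>a - t0\<bar> \<bar>b - t0\<bar> > 0" using assms(1,2) by simp
    show "t \<in> closed_segment t0 a \<or> t \<in> closed_segment t0 b" if "\<bar>t - t0\<bar> < min \<bar>a - t0\<bar> \<bar>b - t0\<bar>" for t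
      using opposite that unfolding closed_segment_eq_real_ivl by (cases "a < t0") auto
  qed
qed

text \<open>Two legs of the embedded star leave \<open>t0\<close> in opposite directions along the half-line.\<close>

lemma open_star_embedding_in_half_line_covers:
  assumes k: "2 \<le> k"
    and U: "openin (top_of_set (open_star k)) U" "0 \<in> U"
    and F: "continuous_on U F" "inj_on F U" "F 0 = of_real t0 * star_dir N j" "0 < t0"
      "F ` U \<subseteq> half_line N j"
  shows "\<exists>\<delta>>0. \<forall>t. \<bar>t - t0\<bar> < \<delta> \<longrightarrow> of_real t * star_dir N j \<in> F ` U"
proof -
  obtain \<epsilon> where \<epsilon>: "0 < \<epsilon>" "\<And>i s. \<lbrakk>i < k; s \<in> {0..\<epsilon>}\<rbrakk> \<Longrightarrow> of_real s * star_dir k i \<in> U"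
    and cont: "\<And>i. i < k \<Longrightarrow> continuous_on {0..\<epsilon>} (\<lambda>s. F (of_real s * star_dir k i))"
    and inj: "\<And>i i' s t. \<lbrakk>i < k; i' < k; s \<in> {0..\<epsilon>}; t \<in> {0..\<epsilon>};
        F (of_real s * star_dir k i) = F (of_real t * star_dir k i')\<rbrakk>
        \<Longrightarrow> of_real s * star_dir k i = of_real t * star_dir k i'"
    using open_star_legs[OF U F(1,2)] by blast
  define G where "G i s = F (of_real s * star_dir k i)" for i s
  have G_inj: "inj_on (G i) {0..\<epsilon>}" if "i < k" for i
    using inj[OF that that] by (auto simp: G_def inj_on_def)
  have half: "G i ` {0..\<epsilon>} \<subseteq> half_line N j" if "i < k" for i
    using F(5) \<epsilon>(2)[OF that] unfolding G_def by blast
  have G0: "norm (G i 0) = t0" for i using F(3,4) by (simp add: G_def norm_mult)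
  have seg: "(\<lambda>s. norm (G i s)) ` {0..\<epsilon>} = closed_segment t0 (norm (G i \<epsilon>))"
    "norm (G i \<epsilon>) \<noteq> t0" if "i < k" for i
  proof -
    have "continuous_on {0..\<epsilon>} (G i)" using cont[OF that] by (simp add: G_def)
    from injective_path_in_half_line[OF this G_inj[OF that] \<epsilon>(1) half[OF that]]
    show "(\<lambda>s. norm (G i s)) ` {0..\<epsilon>} = closed_segment t0 (norm (G i \<epsilon>))"
      "norm (G i \<epsilon>) \<noteq> t0"
      by (simp_all add: G0)
  qed
  have ik: "0 < k" "1 < k" using k by auto
  define a where "a = norm (G 0 \<epsilon>)"
  define b where "b = norm (G 1 \<epsilon>)"
  have seg_ab: "(\<lambda>s. norm (G 0 s)) ` {0..\<epsilon>} = closed_segment t0 a"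
    "(\<lambda>s. norm (G 1 s)) ` {0..\<epsilon>} = closed_segment t0 b" and "a \<noteq> t0" "b \<noteq> t0"
    using seg ik by (simp_all add: a_def b_def)
  have common: "m = t0" if m: "m \<in> closed_segment t0 a" "m \<in> closed_segment t0 b" for m
  proof -
    obtain s t where st: "s \<in> {0..\<epsilon>}" "t \<in> {0..\<epsilon>}" "norm (G 0 s) = m" "norm (G 1 t) = m"
      using m unfolding seg_ab[symmetric] by (auto elim!: imageE)
    have on_line: "G 0 s \<in> half_line N j" "G 1 t \<in> half_line N j"
      using half[OF ik(1)] half[OF ik(2)] st(1,2) by auto
    have "G 0 s = G 1 t" by (rule half_line_eq_if_norm_eq[OF on_line]) (use st(3,4) in simp)
    then have "of_real s * star_dir k 0 = of_real t * star_dir k 1"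
      unfolding G_def by (rule inj[OF ik(1,2) st(1,2)])
    then have "s = 0" using scaled_star_dir_eq[of 0 k 1 s t] ik st by (cases "s = 0") auto
    then show ?thesis using st G0 by simp
  qed
  obtain \<delta> where "\<delta> > 0"
    and cover: "\<And>t. \<bar>t - t0\<bar> < \<delta> \<Longrightarrow> t \<in> closed_segment t0 a \<or> t \<in> closed_segment t0 b"
    using closed_segments_cover_nbhd[OF \<open>a \<noteq> t0\<close> \<open>b \<noteq> t0\<close> common] by blast
  have "of_real t * star_dir N j \<in> F ` U" if near: "\<bar>t - t0\<bar> < \<delta>" for t
  proof -
    obtain i where i: "i < k" "t \<in> (\<lambda>s. norm (G i s)) ` {0..\<epsilon>}"
      using cover[OF near]
    proof (elim disjE)
      assume "t \<in> closed_segment t0 a"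
      then show thesis using that[of 0] ik seg_ab(1) by simp
    next
      assume "t \<in> closed_segment t0 b"
      then show thesis using that[of 1] ik seg_ab(2) by simp
    qed
    then obtain s where hit: "i < k" "s \<in> {0..\<epsilon>}" "norm (G i s) = t"
      by (auto elim!: imageE)
    have "G i s \<in> half_line N j" using half[OF hit(1)] hit(2) by blast
    then have "of_real t * star_dir N j = F (of_real s * star_dir k i)"
      unfolding mem_half_line_iff hit(3) by (simp add: G_def)
    then show ?thesis using \<epsilon>(2)[OF hit(1,2)] by blast
  qed
  with \<open>\<delta> > 0\<close> show ?thesis by blast
qed

section \<open>Star charts and the local structure of graphs\<close>

locale star_chart =
  fixes \<Gamma> :: "'g::metric_space set" and S :: "'g set" and N :: nat
    and h :: "'g \<Rightarrow> complex" and h' :: "complex \<Rightarrow> 'g" and q :: 'g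
  assumes openin_chart: "openin (top_of_set \<Gamma>) S"
    and homeomorphism_chart: "homeomorphism S (open_star N) h h'"
    and order_pos: "1 \<le> N"
    and centre_in_chart: "q \<in> S"
    and chart_centre: "h q = 0"

lemma star_point_iff_star_chart:
  "1 \<le> k \<Longrightarrow> star_point Z k x \<longleftrightarrow> (\<exists>U (f :: _ \<Rightarrow> complex) g. star_chart Z U k f g x)"
  unfolding star_point_def star_chart_def by blast

definition start_at :: "'a::topological_space \<Rightarrow> (real \<Rightarrow> 'a) \<Rightarrow> real \<Rightarrow> 'a" where
  "start_at y g = (if pathstart g = y then g else reversepath g)"

lemma arc_start_at: "arc g \<Longrightarrow> arc (start_at y g)"
  by (simp add: start_at_def arc_reversepath)

lemma path_image_start_at [simp]: "path_image (start_at y g) = path_image g"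
  by (simp add: start_at_def)

lemma start_at_0: "y \<in> {pathstart g, pathfinish g} \<Longrightarrow> start_at y g 0 = y"
  by (auto simp: start_at_def pathstart_def pathfinish_def reversepath_def)

lemma ends_start_at:
  "y \<in> {pathstart g, pathfinish g} \<Longrightarrow> {pathstart g, pathfinish g} = {y, start_at y g 1}"
  by (auto simp: start_at_def pathstart_def pathfinish_def reversepath_def)

definition subarc :: "real \<Rightarrow> real \<Rightarrow> (real \<Rightarrow> 'a) \<Rightarrow> real \<Rightarrow> 'a" where
  "subarc u v g = (\<lambda>x. g ((v - u) * x + u))"

lemma path_image_subarc: "path_image (subarc u v g) = g ` closed_segment u v"
  by (auto simp add: closed_segment_real_eq path_image_def subarc_def)

lemma pathstart_subarc [simp]: "pathstart (subarc u v g) = g u"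
  and pathfinish_subarc [simp]: "pathfinish (subarc u v g) = g v"
  by (simp_all add: pathstart_def pathfinish_def subarc_def)

lemma arc_subarc:
  fixes g :: "real \<Rightarrow> 'a::topological_space"
  assumes "arc g" "u \<in> {0..1}" "v \<in> {0..1}" "u \<noteq> v"
  shows "arc (subarc u v g)"
proof -
  have m: "(v - u) * x + u \<in> {0..1}" if "x \<in> {0..1}" for x
  proof -
    have "(v - u) * x + u = (1 - x) * u + x * v" by (simp add: algebra_simps)
    moreover have "0 \<le> (1 - x) * u + x * v" using that assms by auto
    moreover have "(1 - x) * u + x * v \<le> (1 - x) * 1 + x * 1"
      using that assms by (intro add_mono mult_left_mono) auto
    ultimately show ?thesis by auto
  qed
  have c: "continuous_on {0..1} g" "inj_on g {0..1}" using assms(1) by (auto simp: arc_def path_def)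
  have "continuous_on {0..1} (subarc u v g)"
    unfolding subarc_def
    by (rule continuous_on_compose2[OF c(1), of _ "\<lambda>x. (v - u) * x + u"])
       (auto intro!: continuous_on_add continuous_on_mult continuous_on_const continuous_on_id m)
  moreover have "inj_on (subarc u v g) {0..1}"
  proof (rule inj_onI)
    fix x y assume "x \<in> {0..1}" "y \<in> {0..1}" "subarc u v g x = subarc u v g y"
    then have "(v - u) * x + u = (v - u) * y + u" using inj_onD[OF c(2)] m unfolding subarc_def by blast
    then show "x = y" using assms(4) by simp
  qed
  ultimately show ?thesis by (simp add: arc_def path_def)
qed

lemma image_half_atLeastLessThan: "(\<lambda>t::real. t/2) ` {0..<1} = {0..<1/2}"
proof
  show "{0..<1/2} \<subseteq> (\<lambda>t::real. t/2) ` {0..<1}"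
  proof
    fix x :: real assume "x \<in> {0..<1/2}"
    then show "x \<in> (\<lambda>t. t/2) ` {0..<1}" by (intro image_eqI[of _ _ "2 * x"]) auto
  qed
qed auto

locale arc_graph =
  fixes \<Gamma> :: "'g::metric_space set" and A :: "(real \<Rightarrow> 'g) set"
  assumes finite_arcs: "finite A" and arcs: "\<And>g. g \<in> A \<Longrightarrow> arc g"
    and Union_arcs: "\<Gamma> = \<Union>(path_image ` A)"
    and arcs_meet_at_ends: "\<And>g g'. \<lbrakk>g \<in> A; g' \<in> A; g \<noteq> g'\<rbrakk> \<Longrightarrow>
        path_image g \<inter> path_image g' \<subseteq> {pathstart g, pathfinish g} \<inter> {pathstart g', pathfinish g'}"
begin

definition arcs_at :: "'g \<Rightarrow> (real \<Rightarrow> 'g) set" where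
  "arcs_at y = {g \<in> A. pathstart g = y \<or> pathfinish g = y}"

lemma closed_Union_path_image:
  assumes "A' \<subseteq> A"
  shows "closed (\<Union>(path_image ` A'))"
proof -
  have "finite A'" using finite_arcs assms finite_subset by blast
  moreover have "compact (path_image g)" if "g \<in> A'" for g
    using arcs assms that by (intro compact_path_image arc_imp_path) auto
  ultimately show ?thesis by (intro compact_imp_closed compact_Union) auto
qed

lemma not_in_path_image_if_not_arcs_at:
  assumes "arcs_at y \<noteq> {}" "g' \<in> A" "g' \<notin> arcs_at y"
  shows "y \<notin> path_image g'"
proof
  assume yg': "y \<in> path_image g'"
  obtain g where g: "g \<in> arcs_at y" using assms(1) by blast
  then have "y \<in> path_image g"
    by (auto simp: arcs_at_def pathstart_in_path_image pathfinish_in_path_image)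
  moreover have "g \<noteq> g'" using g assms by auto
  ultimately have "y \<in> {pathstart g', pathfinish g'}"
    using arcs_meet_at_ends[of g g'] g assms yg' unfolding arcs_at_def by blast
  then show False using assms unfolding arcs_at_def by auto
qed

lemma common_point_eq_vertex:
  assumes "g \<in> arcs_at y" "g' \<in> A" "g' \<noteq> g" "x \<in> path_image g" "x \<in> path_image g'"
    "x \<noteq> start_at y g 1"
  shows "x = y"
proof -
  have "y \<in> {pathstart g, pathfinish g}" using assms(1) by (auto simp: arcs_at_def)
  moreover have "x \<in> {pathstart g, pathfinish g}"
    using arcs_meet_at_ends[of g g'] assms unfolding arcs_at_def by blast
  ultimately show ?thesis using ends_start_at assms(6) by blast
qed

text \<open>The complement is the union of the other arcs and of the far halves, a compact set.\<close>

lemma openin_near_halves: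
  assumes y: "arcs_at y \<noteq> {}"
  shows "openin (top_of_set \<Gamma>) (\<Union>g\<in>arcs_at y. start_at y g ` {0..<1/2})"
proof -
  let ?S = "\<Union>g\<in>arcs_at y. start_at y g ` {0..<1/2}"
  define K where "K = \<Union>(path_image ` (A - arcs_at y)) \<union> (\<Union>g\<in>arcs_at y. start_at y g ` {1/2..1})"
  have arc: "arc (start_at y g)" if "g \<in> arcs_at y" for g
    using that arcs arc_start_at by (auto simp: arcs_at_def)
  then have inj: "inj_on (start_at y g) {0..1}" if "g \<in> arcs_at y" for g
    using that by (simp add: arc_def)
  have y0: "start_at y g 0 = y" if "g \<in> arcs_at y" for g
    using that start_at_0 by (auto simp: arcs_at_def)
  have "closed K"
  proof -
    have "compact (start_at y g ` {1/2..1})" if "g \<in> arcs_at y" for g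
    proof -
      have "continuous_on {0..1} (start_at y g)" using arc[OF that] by (simp add: arc_def path_def)
      then have "continuous_on {1/2..1} (start_at y g)" by (rule continuous_on_subset) auto
      then show ?thesis by (rule compact_continuous_image) simp
    qed
    moreover have "finite (arcs_at y)" using finite_arcs by (simp add: arcs_at_def)
    ultimately show ?thesis unfolding K_def
      by (intro closed_Un closed_Union_path_image compact_imp_closed compact_UN) auto
  qed
  moreover have "?S = \<Gamma> - K"
  proof
    show "?S \<subseteq> \<Gamma> - K"
    proof
      fix x assume "x \<in> ?S"
      then obtain g where g: "g \<in> arcs_at y" and "x \<in> start_at y g ` {0..<1/2}" by blast
      from this(2) obtain t where x: "x = start_at y g t" and t: "t \<in> {0..<1/2}" by (rule imageE)
      have "x \<in> path_image (start_at y g)" unfolding path_image_def using x t by auto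
      then have xg: "x \<in> path_image g" by simp
      have "x \<in> \<Gamma>" using xg g Union_arcs by (auto simp: arcs_at_def)
      moreover have x1: "x \<noteq> start_at y g 1"
        using inj_onD[OF inj[OF g], of t 1] x t by auto
      have "x \<notin> path_image g'" if "g' \<in> A - arcs_at y" for g'
      proof
        assume "x \<in> path_image g'"
        moreover have "g' \<noteq> g" using that g by auto
        ultimately have "x = y" using common_point_eq_vertex[OF g _ _ xg _ x1] that by blast
        then show False
          using not_in_path_image_if_not_arcs_at[OF y] that \<open>x \<in> path_image g'\<close> by blast
      qed
      moreover have "x \<notin> start_at y g' ` {1/2..1}" if g': "g' \<in> arcs_at y" for g'
      proof
        assume "x \<in> start_at y g' ` {1/2..1}"
        then obtain v where "x = start_at y g' v" "v \<in> {1/2..1}" by (rule imageE)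
        then have v: "v \<in> {1/2..1}" "x = start_at y g' v" by simp_all
        show False
        proof (cases "g' = g")
          case True
          then show False using inj_onD[OF inj[OF g], of t v] x v t by auto
        next
          case False
          have "x \<in> path_image (start_at y g')" unfolding path_image_def using v by auto
          then have "x \<in> path_image g'" by simp
          then have "x = y" using common_point_eq_vertex[OF g _ False xg _ x1] g' by (auto simp: arcs_at_def)
          then show False using inj_onD[OF inj[OF g'], of v 0] y0[OF g'] v by auto
        qed
      qed
      ultimately show "x \<in> \<Gamma> - K" unfolding K_def by blast
    qed
    show "\<Gamma> - K \<subseteq> ?S"
    proof
      fix x assume x: "x \<in> \<Gamma> - K"
      then obtain g where g: "g \<in> A" "x \<in> path_image g" using Union_arcs by auto
      have g': "g \<in> arcs_at y" using g x unfolding K_def by blast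
      have "x \<in> path_image (start_at y g)" using g(2) by simp
      then obtain u where u: "x = start_at y g u" "u \<in> {0..1}" unfolding path_image_def by (rule imageE)
      moreover have "u \<notin> {1/2..1}" using x u g' unfolding K_def by blast
      ultimately have "u \<in> {0..<1/2}" by auto
      then show "x \<in> ?S" using u(1) g' by blast
    qed
  qed
  ultimately show ?thesis by (simp add: openin_open_Int open_Compl Diff_eq Int_commute)
qed

lemma homeomorphism_open_star_near_halves:
  assumes y: "arcs_at y \<noteq> {}"
  shows "\<exists>\<Phi> \<Psi>. homeomorphism (open_star (card (arcs_at y)))
    (\<Union>g\<in>arcs_at y. start_at y g ` {0..<1/2}) \<Phi> \<Psi> \<and> \<Phi> 0 = y"
proof -
  define d where "d = card (arcs_at y)"
  have "finite (arcs_at y)" using finite_arcs by (simp add: arcs_at_def)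
  then have d1: "1 \<le> d" using y by (simp add: d_def Suc_le_eq card_gt_0_iff)
  obtain e where e: "bij_betw e {..<d} (arcs_at y)"
    using \<open>finite (arcs_at y)\<close> by (metis bij_betw_from_nat_into_finite d_def lessThan_atLeast0)
  then have eA: "e i \<in> arcs_at y" if "i < d" for i using that by (auto simp: bij_betw_def)
  define gg where "gg i = start_at y (e i)" for i
  have arc: "arc (gg i)" if "i < d" for i
    using eA[OF that] arcs arc_start_at by (auto simp: arcs_at_def gg_def)
  then have gg_cont: "continuous_on {0..1} (gg i)" and gg_inj: "inj_on (gg i) {0..1}" if "i < d" for i
    using that by (auto simp: arc_def path_def)
  have gg0: "gg i 0 = y" if "i < d" for i
    using eA[OF that] start_at_0 by (auto simp: arcs_at_def gg_def)
  define \<gamma> where "\<gamma> i = (\<lambda>t. gg i (t/2))" for i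
  have half: "t/2 \<in> {0..1}" if "t \<in> {0..1}" for t :: real using that by auto
  have "\<exists>\<Phi> \<Psi>. homeomorphism (open_star d) (\<Union>i<d. \<gamma> i ` {0..<1}) \<Phi> \<Psi> \<and> \<Phi> 0 = y"
  proof (rule homeomorphism_open_star_Union_arcs[OF d1])
    show "continuous_on {0..1} (\<gamma> i)" if "i < d" for i
      unfolding \<gamma>_def
      by (rule continuous_on_compose2[OF gg_cont[OF that], of _ "\<lambda>t. t/2"])
         (auto intro!: continuous_on_divide continuous_on_id continuous_on_const)
    show "inj_on (\<gamma> i) {0..1}" if "i < d" for i
    proof (rule inj_onI)
      fix s t :: real assume "s \<in> {0..1}" "t \<in> {0..1}" "\<gamma> i s = \<gamma> i t"
      then have "s/2 = t/2" using inj_onD[OF gg_inj[OF that]] half unfolding \<gamma>_def by blast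
      then show "s = t" by simp
    qed
    show "\<gamma> i 0 = y" if "i < d" for i using gg0[OF that] by (simp add: \<gamma>_def)
    show "s = 0" if ik: "i < d" "k < d" "i \<noteq> k" "s \<in> {0..1}" "t \<in> {0..1}" "\<gamma> i s = \<gamma> k t"
      for i k s t
    proof -
      define x where "x = gg i (s/2)"
      have "x \<in> path_image (gg i)" using half[OF ik(4)] by (auto simp: x_def path_image_def)
      then have xi: "x \<in> path_image (e i)" by (simp add: gg_def)
      have "x \<in> path_image (gg k)" using half[OF ik(5)] ik(6) by (auto simp: x_def \<gamma>_def path_image_def)
      then have xk: "x \<in> path_image (e k)" by (simp add: gg_def)
      have "e k \<noteq> e i" using e ik by (auto simp: bij_betw_def inj_on_def)
      moreover have "x \<noteq> start_at y (e i) 1"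
        using inj_onD[OF gg_inj[OF ik(1)], of "s/2" 1] half[OF ik(4)] ik(4) by (auto simp: x_def gg_def)
      moreover have "e k \<in> A" using eA[OF ik(2)] by (simp add: arcs_at_def)
      ultimately have "x = y" using common_point_eq_vertex[OF eA[OF ik(1)] _ _ xi xk] by blast
      then show "s = 0"
        using inj_onD[OF gg_inj[OF ik(1)], of "s/2" 0] gg0[OF ik(1)] half[OF ik(4)] by (simp add: x_def)
    qed
  qed
  moreover have "(\<Union>i<d. \<gamma> i ` {0..<1}) = (\<Union>g\<in>arcs_at y. start_at y g ` {0..<1/2})"
  proof -
    have "\<gamma> i ` {0..<1} = gg i ` {0..<1/2}" for i
      using image_image[of "gg i" "\<lambda>t. t/2" "{0..<1::real}"] by (simp add: \<gamma>_def image_half_atLeastLessThan)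
    then have "(\<Union>i<d. \<gamma> i ` {0..<1}) = (\<Union>g\<in>e ` {..<d}. start_at y g ` {0..<1/2})"
      by (simp add: gg_def)
    also have "\<dots> = (\<Union>g\<in>arcs_at y. start_at y g ` {0..<1/2})" using e by (simp add: bij_betw_def)
    finally show ?thesis .
  qed
  ultimately show ?thesis unfolding d_def by simp
qed

lemma vertex_chart:
  assumes y: "arcs_at y \<noteq> {}"
  shows "\<exists>S h h'. star_chart \<Gamma> S (card (arcs_at y)) h h' y"
proof -
  let ?S = "\<Union>g\<in>arcs_at y. start_at y g ` {0..<1/2}"
  obtain \<Phi> \<Psi> where hom: "homeomorphism (open_star (card (arcs_at y))) ?S \<Phi> \<Psi>" and \<Phi>0: "\<Phi> 0 = y"
    using homeomorphism_open_star_near_halves[OF y] by blast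
  have "finite (arcs_at y)" using finite_arcs by (simp add: arcs_at_def)
  then have d1: "1 \<le> card (arcs_at y)" using y by (simp add: Suc_le_eq card_gt_0_iff)
  have 0: "0 \<in> open_star (card (arcs_at y))" by (rule zero_in_open_star[OF d1])
  have "star_chart \<Gamma> ?S (card (arcs_at y)) \<Psi> \<Phi> y"
  proof (rule star_chart.intro)
    show "openin (top_of_set \<Gamma>) ?S" by (rule openin_near_halves[OF y])
    show "homeomorphism ?S (open_star (card (arcs_at y))) \<Psi> \<Phi>" using homeomorphism_symD[OF hom] .
    show "1 \<le> card (arcs_at y)" by (rule d1)
    show "y \<in> ?S" using homeomorphism_image1[OF hom] imageI[OF 0, of \<Phi>] \<Phi>0 by simp
    show "\<Psi> y = 0" using homeomorphism_apply1[OF hom 0] \<Phi>0 by simp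
  qed
  then show ?thesis by blast
qed

end

context arc_graph
begin

lemma subarc_meets_other_arc_at_ends:
  assumes g: "g \<in> A" "g' \<in> A" "g' \<noteq> g" and s: "0 < s" "s < 1" and v: "v = 0 \<or> v = 1"
  shows "path_image (subarc s v g) \<inter> path_image g' \<subseteq>
    {pathstart (subarc s v g), pathfinish (subarc s v g)} \<inter> {pathstart g', pathfinish g'}"
proof
  fix x assume x: "x \<in> path_image (subarc s v g) \<inter> path_image g'"
  then obtain u where u: "u \<in> closed_segment s v" "x = g u" unfolding path_image_subarc by auto
  have sv: "closed_segment s v \<subseteq> {0..1}" using s v by (auto simp: closed_segment_eq_real_ivl)
  then have "x \<in> path_image g" using u unfolding path_image_def by auto
  then have xx: "x \<in> {pathstart g, pathfinish g} \<inter> {pathstart g', pathfinish g'}"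
    using arcs_meet_at_ends[OF g(1,2)] g(3) x by blast
  have "inj_on g {0..1}" using arcs[OF g(1)] by (simp add: arc_def)
  have "x \<noteq> g (1 - v)"
  proof
    assume "x = g (1 - v)"
    then have "u = 1 - v" using inj_onD[OF \<open>inj_on g {0..1}\<close>, of u "1 - v"] u sv v by auto
    then show False using u s v by (auto simp: closed_segment_eq_real_ivl)
  qed
  then have "x = g v" using xx v unfolding pathstart_def pathfinish_def by auto
  then show "x \<in> {pathstart (subarc s v g), pathfinish (subarc s v g)} \<inter> {pathstart g', pathfinish g'}"
    using xx by simp
qed

lemma arc_graph_split_arc:
  assumes g: "g \<in> A" and s: "0 < s" "s < 1"
  shows "arc_graph \<Gamma> (insert (subarc s 0 g) (insert (subarc s 1 g) (A - {g})))"
proof -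
  define g1 where "g1 = subarc s 0 g"
  define g2 where "g2 = subarc s 1 g"
  have "arc g" using arcs g by simp
  then have inj: "inj_on g {0..1}" by (simp add: arc_def)
  have pi1: "path_image g1 = g ` {0..s}"
    unfolding g1_def path_image_subarc using s by (simp add: closed_segment_eq_real_ivl)
  have pi2: "path_image g2 = g ` {s..1}"
    unfolding g2_def path_image_subarc using s by (simp add: closed_segment_eq_real_ivl)
  have "path_image g = path_image g1 \<union> path_image g2"
  proof -
    have "{0..1::real} = {0..s} \<union> {s..1}" using s by auto
    then show ?thesis unfolding pi1 pi2 by (simp add: path_image_def image_Un)
  qed
  have ends: "pathstart g1 = g s" "pathfinish g1 = g 0" "pathstart g2 = g s" "pathfinish g2 = g 1"
    by (simp_all add: g1_def g2_def)
  have meet_other: "path_image h \<inter> path_image h' \<subseteq> {pathstart h, pathfinish h} \<inter> {pathstart h', pathfinish h'}"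
    if h: "h \<in> {g1, g2}" "h' \<in> A" "h' \<noteq> g" for h h'
    using h subarc_meets_other_arc_at_ends[OF g h(2,3) s, of 0]
      subarc_meets_other_arc_at_ends[OF g h(2,3) s, of 1]
    unfolding g1_def g2_def by auto
  have meet_halves: "path_image g1 \<inter> path_image g2 \<subseteq> {g s}"
  proof
    fix x assume "x \<in> path_image g1 \<inter> path_image g2"
    then obtain u v where uv: "u \<in> {0..s}" "v \<in> {s..1}" "x = g u" "x = g v" using pi1 pi2 by auto
    then have "v = s" using inj_onD[OF inj, of u v] s by auto
    then show "x \<in> {g s}" using uv by simp
  qed
  define A' where "A' = insert g1 (insert g2 (A - {g}))"
  have "arc_graph \<Gamma> A'"
  proof
    show "finite A'" using finite_arcs by (simp add: A'_def)
    show "arc h" if "h \<in> A'" for h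
      using that arcs \<open>arc g\<close> s by (auto simp: A'_def g1_def g2_def intro: arc_subarc)
    have "\<Gamma> = path_image g \<union> \<Union>(path_image ` (A - {g}))" using Union_arcs g by blast
    then show "\<Gamma> = \<Union>(path_image ` A')" unfolding \<open>path_image g = _\<close> A'_def by auto
    show "path_image h \<inter> path_image h' \<subseteq> {pathstart h, pathfinish h} \<inter> {pathstart h', pathfinish h'}"
      if "h \<in> A'" "h' \<in> A'" "h \<noteq> h'" for h h'
    proof (cases "h \<in> {g1, g2}"; cases "h' \<in> {g1, g2}")
      assume "h \<in> {g1, g2}" "h' \<in> {g1, g2}"
      then have "path_image h \<inter> path_image h' \<subseteq> {g s}" "pathstart h = g s" "pathstart h' = g s"
        using meet_halves that(3) ends by auto
      then show ?thesis by auto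
    next
      assume "h \<in> {g1, g2}" "h' \<notin> {g1, g2}"
      then show ?thesis using meet_other that(2) by (auto simp: A'_def)
    next
      assume "h \<notin> {g1, g2}" "h' \<in> {g1, g2}"
      then show ?thesis using meet_other[of h' h] that(1) by (auto simp: A'_def)
    next
      assume "h \<notin> {g1, g2}" "h' \<notin> {g1, g2}"
      then show ?thesis using arcs_meet_at_ends[of h h'] that by (auto simp: A'_def)
    qed
  qed
  then show ?thesis by (simp add: A'_def g1_def g2_def)
qed

lemma interior_chart:
  assumes y: "y \<in> \<Gamma>" "y \<notin> pathstart ` A \<union> pathfinish ` A"
  shows "\<exists>S h h'. star_chart \<Gamma> S 2 h h' y"
proof -
  obtain g where g: "g \<in> A" "y \<in> path_image g" using y(1) Union_arcs by auto
  obtain s where s: "s \<in> {0..1}" "y = g s" using g(2) unfolding path_image_def by auto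
  have "pathstart g \<noteq> y" "pathfinish g \<noteq> y" using y(2) g(1) by auto
  then have s01: "0 < s" "s < 1" using s unfolding pathstart_def pathfinish_def
    by (metis atLeastAtMost_iff order_le_less)+
  define g1 where "g1 = subarc s 0 g"
  define g2 where "g2 = subarc s 1 g"
  define A' where "A' = insert g1 (insert g2 (A - {g}))"
  interpret split: arc_graph \<Gamma> A'
    unfolding A'_def g1_def g2_def by (rule arc_graph_split_arc[OF g(1) s01])
  have "g 0 \<noteq> g 1" using arcs[OF g(1)] inj_onD[of g "{0..1}" 0 1] by (auto simp: arc_def)
  then have "g1 \<noteq> g2" by (metis g1_def g2_def pathfinish_subarc)
  have "split.arcs_at y = {g1, g2}"
  proof
    show "{g1, g2} \<subseteq> split.arcs_at y"
      unfolding split.arcs_at_def using s by (auto simp: A'_def g1_def g2_def)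
    show "split.arcs_at y \<subseteq> {g1, g2}"
    proof
      fix h assume h: "h \<in> split.arcs_at y"
      show "h \<in> {g1, g2}"
      proof (rule ccontr)
        assume "h \<notin> {g1, g2}"
        then have "h \<in> A" "pathstart h = y \<or> pathfinish h = y"
          using h unfolding split.arcs_at_def by (auto simp: A'_def)
        then show False using y(2) by auto
      qed
    qed
  qed
  then have "card (split.arcs_at y) = 2" using \<open>g1 \<noteq> g2\<close> by simp
  then show ?thesis using split.vertex_chart \<open>split.arcs_at y = {g1, g2}\<close> by fastforce
qed

end

lemma is_graph_local_charts:
  assumes "is_graph \<Gamma>"
  obtains F where "finite F"
    "\<And>y. y \<in> \<Gamma> \<Longrightarrow> \<exists>S d h h'. star_chart \<Gamma> S d h h' y \<and> (y \<notin> F \<longrightarrow> d \<le> 2)"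
proof -
  obtain A :: "(real \<Rightarrow> _) set" where "finite A" "\<forall>g\<in>A. arc g" "\<Gamma> = \<Union>(path_image ` A)"
    "\<forall>g\<in>A. \<forall>g'\<in>A. g \<noteq> g' \<longrightarrow>
       path_image g \<inter> path_image g' \<subseteq> {pathstart g, pathfinish g} \<inter> {pathstart g', pathfinish g'}"
    using assms unfolding is_graph_def by blast
  then interpret arc_graph \<Gamma> A by unfold_locales auto
  define F where "F = pathstart ` A \<union> pathfinish ` A"
  have "\<exists>S d h h'. star_chart \<Gamma> S d h h' y \<and> (y \<notin> F \<longrightarrow> d \<le> 2)" if y: "y \<in> \<Gamma>" for y
  proof (cases "y \<in> F")
    case True
    then have "arcs_at y \<noteq> {}" by (auto simp: F_def arcs_at_def)
    then show ?thesis using vertex_chart True by blast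
  next
    case False
    then show ?thesis using interior_chart[OF y] by (fastforce simp: F_def)
  qed
  moreover have "finite F" using finite_arcs by (simp add: F_def)
  ultimately show ?thesis using that by blast
qed

section \<open>Closed sets without end points seen through a star chart\<close>

lemma star_point_embedding:
  assumes "star_point Z k x" "Z \<subseteq> \<Gamma>" "openin (top_of_set \<Gamma>) W" "x \<in> W"
  obtains U g where "openin (top_of_set (open_star k)) U" "0 \<in> U" "continuous_on U g" "inj_on g U"
    "g 0 = x" "g ` U \<subseteq> Z \<inter> W"
proof -
  obtain V f g where V: "openin (top_of_set Z) V" "x \<in> V" "homeomorphism V (open_star k) f g" "f x = 0"
    using assms(1) unfolding star_point_def by blast
  have "V \<subseteq> Z" using V(1) by (rule openin_imp_subset)
  obtain T where T: "open T" "W = \<Gamma> \<inter> T" using assms(3) openin_open by metis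
  have "V \<inter> W = V \<inter> T" using T \<open>V \<subseteq> Z\<close> assms(2) by blast
  then have "openin (top_of_set V) (V \<inter> W)" using openin_open_Int[OF T(1)] by simp
  then have U: "openin (top_of_set (open_star k)) (f ` (V \<inter> W))"
    by (rule homeomorphism_imp_open_map[OF V(3)])
  have hom: "\<forall>z\<in>open_star k. f (g z) = z" "\<forall>y\<in>V. g (f y) = y" "continuous_on (open_star k) g"
    using V(3) unfolding homeomorphism_def by auto
  have sub: "f ` (V \<inter> W) \<subseteq> open_star k" using U by (rule openin_imp_subset)
  show ?thesis
  proof (rule that[OF U])
    show "0 \<in> f ` (V \<inter> W)" using V(2,4) assms(4) by force
    show "continuous_on (f ` (V \<inter> W)) g" using continuous_on_subset[OF hom(3) sub] .
    show "inj_on g (f ` (V \<inter> W))" using hom(1) sub by (metis inj_on_inverseI subsetD)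
    show "g 0 = x" using hom(2) V(2,4) by metis
    show "g ` f ` (V \<inter> W) \<subseteq> Z \<inter> W" using hom(2) \<open>V \<subseteq> Z\<close> by auto
  qed
qed

lemma homeomorphism_compose_inj_on:
  assumes "homeomorphism S T h h'" "continuous_on U g" "inj_on g U" "g ` U \<subseteq> S"
  shows "continuous_on U (h \<circ> g)" "inj_on (h \<circ> g) U"
proof -
  have h: "continuous_on S h" "\<forall>x\<in>S. h' (h x) = x" using assms(1) unfolding homeomorphism_def by auto
  show "continuous_on U (h \<circ> g)"
    by (rule continuous_on_compose[OF assms(2) continuous_on_subset[OF h(1) assms(4)]])
  show "inj_on (h \<circ> g) U"
    using assms(3,4) h(2) by (auto simp: inj_on_def image_subset_iff) metis
qed

context star_chart
begin

lemma chart_image: "h ` S = open_star N" "h' ` open_star N = S"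
  and chart_inverse: "x \<in> S \<Longrightarrow> h' (h x) = x" "z \<in> open_star N \<Longrightarrow> h (h' z) = z"
  and continuous_chart: "continuous_on S h" "continuous_on (open_star N) h'"
  using homeomorphism_chart unfolding homeomorphism_def by auto

lemma chart_inverse_zero: "h' 0 = q"
  using chart_inverse(1)[OF centre_in_chart] chart_centre by simp

lemma star_point_le_card:
  assumes "star_point Z r q" "Z \<subseteq> \<Gamma>" "J \<subseteq> {..<N}"
    and "h ` (Z \<inter> S) \<subseteq> (\<Union>j\<in>J. star_branch N j)"
  shows "r \<le> card J"
proof -
  obtain U g where U: "openin (top_of_set (open_star r)) U" "0 \<in> U" "continuous_on U g" "inj_on g U"
    "g 0 = q" "g ` U \<subseteq> Z \<inter> S"
    using star_point_embedding[OF assms(1,2) openin_chart centre_in_chart] by blast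
  then have "g ` U \<subseteq> S" by blast
  note hg = homeomorphism_compose_inj_on[OF homeomorphism_chart U(3,4) this]
  show ?thesis
  proof (rule open_star_embedding_card_le[OF assms(3) U(1,2) hg])
    show "(h \<circ> g) 0 = 0" using U(5) chart_centre by simp
    show "(h \<circ> g) ` U \<subseteq> (\<Union>j\<in>J. star_branch N j)" using assms(4) U(6) by (auto simp: image_subset_iff)
  qed
qed

lemma star_point_le_order:
  assumes "star_point Z r q" "Z \<subseteq> \<Gamma>"
  shows "r \<le> N"
proof -
  have "h ` (Z \<inter> S) \<subseteq> open_star N" using chart_image by blast
  then have "r \<le> card {..<N}"
    using star_point_le_card[OF assms, of "{..<N}"] open_star_eq_Union_star_branch[OF order_pos] by simp
  then show ?thesis by simp
qed

text \<open>The branches of the chart lying in \<open>Z\<close>; they make up the full sub-star of the statement.\<close>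

definition full_branches :: "'g set \<Rightarrow> nat set" where
  "full_branches Z = {j. j < N \<and> (\<forall>t. 0 < t \<and> t < 1 \<longrightarrow> h' (of_real t * star_dir N j) \<in> Z)}"

lemma full_branches_subset: "full_branches Z \<subseteq> {..<N}"
  by (auto simp: full_branches_def)

text \<open>Not being an end point, the point is the centre of a star of order \<open>\<ge> 2\<close> in \<open>Z\<close>; pulled back
  into the chart it stays in the ray, and so covers a neighbourhood of the point in the ray.\<close>

lemma ray_locally_in_image:
  assumes Z: "Z \<subseteq> \<Gamma>" "\<And>x. x \<in> Z \<Longrightarrow> \<not> end_point Z x"
    and j: "j < N" and t1: "0 < t1" "t1 < 1" and in_Z: "h' (of_real t1 * star_dir N j) \<in> Z"
  shows "\<exists>\<delta>>0. \<forall>t. \<bar>t - t1\<bar> < \<delta> \<longrightarrow> of_real t * star_dir N j \<in> h ` (Z \<inter> S)"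
proof -
  define x where "x = h' (of_real t1 * star_dir N j)"
  have w: "of_real t1 * star_dir N j \<in> open_star N"
    using t1 j by (intro scaled_star_dir_in_open_star) auto
  have xS: "x \<in> S" using chart_image(2) w x_def by blast
  have hx: "h x = of_real t1 * star_dir N j" using chart_inverse(2)[OF w] x_def by simp
  obtain k where k: "2 \<le> k" "star_point Z k x" using Z(2) in_Z unfolding end_point_def x_def by auto
  define W where "W = S \<inter> h -` open_ray N j"
  have "openin (top_of_set S) W"
    unfolding W_def using continuous_openin_preimage[OF continuous_chart(1) _ openin_open_ray[OF j]]
      chart_image(1) by blast
  then have oW: "openin (top_of_set \<Gamma>) W" using openin_chart openin_trans by blast
  have xW: "x \<in> W" unfolding W_def open_ray_def using xS hx t1 by auto
  obtain U g where U: "openin (top_of_set (open_star k)) U" "0 \<in> U" "continuous_on U g" "inj_on g U"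
    "g 0 = x" "g ` U \<subseteq> Z \<inter> W"
    using star_point_embedding[OF k(2) Z(1) oW xW] by blast
  have "g ` U \<subseteq> S" using U(6) W_def by auto
  note hg = homeomorphism_compose_inj_on[OF homeomorphism_chart U(3,4) this]
  have "\<exists>\<delta>>0. \<forall>t. \<bar>t - t1\<bar> < \<delta> \<longrightarrow> of_real t * star_dir N j \<in> (h \<circ> g) ` U"
  proof (rule open_star_embedding_in_half_line_covers[OF k(1) U(1,2) hg _ t1(1)])
    show "(h \<circ> g) 0 = of_real t1 * star_dir N j" using U(5) hx by simp
    have "(h \<circ> g) ` U \<subseteq> open_ray N j" using U(6) W_def by auto
    then show "(h \<circ> g) ` U \<subseteq> half_line N j" using open_ray_subset_half_line by blast
  qed
  moreover have "(h \<circ> g) ` U \<subseteq> h ` (Z \<inter> S)" using U(6) W_def by auto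
  ultimately show ?thesis by blast
qed

text \<open>The parameters \<open>t \<in> {0<..<1}\<close> with \<open>h' (t \<cdot> \<omega>\<^sup>j) \<in> Z\<close> form a closed and, by the previous
  lemma, open subset of the interval.\<close>

lemma mem_full_branches_if_meets:
  assumes Z: "closed Z" "Z \<subseteq> \<Gamma>" "\<And>x. x \<in> Z \<Longrightarrow> \<not> end_point Z x"
    and j: "j < N" and t0: "0 < t0" "t0 < 1" "h' (of_real t0 * star_dir N j) \<in> Z"
  shows "j \<in> full_branches Z"
proof -
  define \<phi> where "\<phi> t = h' (of_real t * star_dir N j)" for t
  define P where "P = {0<..<1} \<inter> \<phi> -` Z"
  have "continuous_on {0<..<1} \<phi>"
    unfolding \<phi>_def
    by (rule continuous_on_compose2[OF continuous_chart(2)])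
       (use scaled_star_dir_in_open_star j in \<open>auto intro!: continuous_intros\<close>)
  then have closedin: "closedin (top_of_set {0<..<1}) P"
    unfolding P_def by (rule continuous_closedin_preimage[OF _ Z(1)])
  have openin: "openin (top_of_set {0<..<1}) P"
    unfolding openin_euclidean_subtopology_iff
  proof (intro conjI ballI)
    show "P \<subseteq> {0<..<1}" unfolding P_def by auto
    fix t1 assume "t1 \<in> P"
    then have t1: "0 < t1" "t1 < 1" "h' (of_real t1 * star_dir N j) \<in> Z" unfolding P_def \<phi>_def by auto
    obtain \<delta> where \<delta>: "\<delta> > 0" "\<And>t. \<bar>t - t1\<bar> < \<delta> \<Longrightarrow> of_real t * star_dir N j \<in> h ` (Z \<inter> S)"
      using ray_locally_in_image[OF Z(2,3) j t1] by blast
    show "\<exists>e>0. \<forall>t\<in>{0<..<1}. dist t t1 < e \<longrightarrow> t \<in> P"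
    proof (intro exI[of _ \<delta>] conjI ballI impI \<delta>(1))
      fix t assume t: "t \<in> {0<..<1}" "dist t t1 < \<delta>"
      then obtain y where y: "y \<in> Z \<inter> S" "of_real t * star_dir N j = h y"
        using \<delta>(2)[of t] by (auto simp: dist_real_def)
      then have "\<phi> t = y" unfolding \<phi>_def using chart_inverse(1) by simp
      then show "t \<in> P" unfolding P_def using t y by auto
    qed
  qed
  have "t0 \<in> P" unfolding P_def \<phi>_def using t0 by auto
  then have "P = {0<..<1}" using connected_clopen[of "{0<..<1::real}"] closedin openin by auto
  have "h' (of_real t * star_dir N j) \<in> Z" if "0 < t" "t < 1" for t
  proof -
    have "t \<in> P" using that \<open>P = {0<..<1}\<close> by simp
    then show ?thesis unfolding P_def \<phi>_def by simp
  qed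
  then show ?thesis using j unfolding full_branches_def by simp
qed

lemma full_branches_nonempty:
  assumes Z: "closed Z" "Z \<subseteq> \<Gamma>" "\<And>x. x \<in> Z \<Longrightarrow> \<not> end_point Z x" and q: "q \<in> Z"
  shows "full_branches Z \<noteq> {}"
proof
  assume none: "full_branches Z = {}"
  have only_q: "y = q" if y: "y \<in> Z \<inter> S" for y
  proof -
    have "h y \<in> open_star N" using chart_image(1) y by blast
    then obtain t j where tj: "0 \<le> t" "t < 1" "j < N" "h y = of_real t * star_dir N j"
      unfolding open_star_eq[OF order_pos] by auto
    have y_eq: "h' (h y) = y" using chart_inverse(1) y by simp
    show "y = q"
    proof (cases "t = 0")
      case True
      then show ?thesis using tj y_eq chart_inverse_zero by simp
    next
      case False
      then have "j \<in> full_branches Z"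
        using mem_full_branches_if_meets[OF Z tj(3) _ tj(2)] y_eq y tj by auto
      then show ?thesis using none by simp
    qed
  qed
  obtain k where k: "2 \<le> k" "star_point Z k q" using Z(3)[OF q] q unfolding end_point_def by auto
  obtain U g where U: "openin (top_of_set (open_star k)) U" "0 \<in> U" "continuous_on U g" "inj_on g U"
    "g 0 = q" "g ` U \<subseteq> Z \<inter> S"
    using star_point_embedding[OF k(2) Z(2) openin_chart centre_in_chart] by blast
  obtain \<epsilon> where \<epsilon>: "0 < \<epsilon>" "\<And>i s. \<lbrakk>i < k; s \<in> {0..\<epsilon>}\<rbrakk> \<Longrightarrow> of_real s * star_dir k i \<in> U"
    and "\<And>i. i < k \<Longrightarrow> continuous_on {0..\<epsilon>} (\<lambda>s. g (of_real s * star_dir k i))"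
    and "\<And>i i' s t. \<lbrakk>i < k; i' < k; s \<in> {0..\<epsilon>}; t \<in> {0..\<epsilon>};
        g (of_real s * star_dir k i) = g (of_real t * star_dir k i')\<rbrakk>
        \<Longrightarrow> of_real s * star_dir k i = of_real t * star_dir k i'"
    using open_star_legs[OF U(1,2,3,4)] by blast
  have leg: "of_real \<epsilon> * star_dir k 0 \<in> U" using \<epsilon> k by auto
  then have "g (of_real \<epsilon> * star_dir k 0) = g 0" using only_q U(5,6) by blast
  then have "of_real \<epsilon> * star_dir k 0 = 0" using inj_onD[OF U(4) _ leg U(2)] by blast
  then show False using \<epsilon> by simp
qed

lemma Int_chart_eq_full_branches:
  assumes Z: "closed Z" "Z \<subseteq> \<Gamma>" "\<And>x. x \<in> Z \<Longrightarrow> \<not> end_point Z x" and q: "q \<in> Z"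
  shows "Z \<inter> S = h' ` (\<Union>j\<in>full_branches Z. star_branch N j)"
proof
  show "Z \<inter> S \<subseteq> h' ` (\<Union>j\<in>full_branches Z. star_branch N j)"
  proof
    fix y assume y: "y \<in> Z \<inter> S"
    have "h y \<in> open_star N" using chart_image(1) y by blast
    then obtain t j where tj: "0 \<le> t" "t < 1" "j < N" "h y = of_real t * star_dir N j"
      unfolding open_star_eq[OF order_pos] by auto
    have y_eq: "h' (h y) = y" using chart_inverse(1) y by simp
    show "y \<in> h' ` (\<Union>j\<in>full_branches Z. star_branch N j)"
    proof (cases "t = 0")
      case True
      obtain j0 where "j0 \<in> full_branches Z" using full_branches_nonempty[OF Z q] by blast
      moreover have "y = h' 0" using True tj y_eq by simp
      ultimately show ?thesis using zero_in_star_branch by blast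
    next
      case False
      then have "j \<in> full_branches Z"
        using mem_full_branches_if_meets[OF Z tj(3) _ tj(2)] y_eq y tj by auto
      moreover have "h y \<in> star_branch N j" unfolding star_branch_eq using tj by auto
      ultimately show ?thesis using y_eq by (metis UN_I image_eqI)
    qed
  qed
  show "h' ` (\<Union>j\<in>full_branches Z. star_branch N j) \<subseteq> Z \<inter> S"
  proof
    fix y assume "y \<in> h' ` (\<Union>j\<in>full_branches Z. star_branch N j)"
    then obtain j w where jw: "j \<in> full_branches Z" "w \<in> star_branch N j" "y = h' w" by auto
    then obtain t where t: "0 \<le> t" "t < 1" "w = of_real t * star_dir N j"
      unfolding star_branch_eq by auto
    have "j < N" using jw(1) full_branches_subset by auto
    then have "y \<in> S" using star_branch_subset_open_star chart_image(2) jw by blast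
    moreover have "y \<in> Z"
    proof (cases "t = 0")
      case True
      then show ?thesis using jw t chart_inverse_zero q by simp
    next
      case False
      then show ?thesis using jw t unfolding full_branches_def by auto
    qed
    ultimately show "y \<in> Z \<inter> S" by blast
  qed
qed

lemma star_point_full_branches:
  assumes "J \<subseteq> {..<N}" "1 \<le> card J" and Z: "Z \<subseteq> \<Gamma>" "q \<in> Z"
    and ZS: "Z \<inter> S = h' ` (\<Union>j\<in>J. star_branch N j)"
  shows "star_point Z (card J) q"
proof -
  let ?X = "\<Union>j\<in>J. star_branch N j"
  obtain \<Phi> \<Psi> where hom: "homeomorphism (open_star (card J)) ?X \<Phi> \<Psi>" "\<Phi> 0 = 0"
    using homeomorphism_open_star_Union_star_branch[OF assms(1,2)] by blast
  have X: "?X \<subseteq> open_star N" using star_branch_subset_open_star assms(1) by blast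
  have "h ` (Z \<inter> S) = (h \<circ> h') ` ?X" unfolding ZS by (simp add: image_comp)
  also have "\<dots> = ?X" using chart_inverse(2) X by (force simp: image_iff)
  finally have "homeomorphism (Z \<inter> S) ?X h h'"
    by (intro homeomorphism_of_subsets[OF homeomorphism_chart _ X]) auto
  then have "homeomorphism (Z \<inter> S) (open_star (card J)) (\<Psi> \<circ> h) (h' \<circ> \<Phi>)"
    by (rule homeomorphism_compose[OF _ homeomorphism_symD[OF hom(1)]])
  moreover have "openin (top_of_set Z) (Z \<inter> S)"
  proof -
    obtain T where T: "open T" "S = \<Gamma> \<inter> T" using openin_chart openin_open by metis
    then have "Z \<inter> S = Z \<inter> T" using Z(1) by blast
    then show ?thesis using openin_open_Int[OF T(1), of Z] by simp
  qed
  moreover have "(\<Psi> \<circ> h) q = 0"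
    using homeomorphism_apply1[OF hom(1) zero_in_open_star[OF assms(2)]] hom(2) chart_centre by simp
  ultimately show ?thesis unfolding star_point_def using Z(2) centre_in_chart by blast
qed

lemma ramification_point_iff_card_full_branches:
  assumes Z: "closed Z" "Z \<subseteq> \<Gamma>" "\<And>x. x \<in> Z \<Longrightarrow> \<not> end_point Z x"
  shows "ramification_point Z q \<longleftrightarrow> q \<in> Z \<and> 3 \<le> card (full_branches Z)"
proof
  assume ram: "ramification_point Z q"
  then have q: "q \<in> Z" by (simp add: ramification_point_def)
  obtain r where r: "3 \<le> r" "star_point Z r q" using ram by (auto simp: ramification_point_def)
  have X: "(\<Union>j\<in>full_branches Z. star_branch N j) \<subseteq> open_star N"
    using star_branch_subset_open_star full_branches_subset by blast
  have "h ` (Z \<inter> S) \<subseteq> (\<Union>j\<in>full_branches Z. star_branch N j)"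
  proof
    fix z assume "z \<in> h ` (Z \<inter> S)"
    then obtain y where y: "y \<in> Z \<inter> S" "z = h y" by blast
    then obtain w where w: "w \<in> (\<Union>j\<in>full_branches Z. star_branch N j)" "y = h' w"
      using Int_chart_eq_full_branches[OF Z q] by blast
    then have "z = w" using chart_inverse(2) X y(2) by blast
    with w(1) show "z \<in> (\<Union>j\<in>full_branches Z. star_branch N j)" by simp
  qed
  then have "r \<le> card (full_branches Z)"
    using star_point_le_card[OF r(2) Z(2) full_branches_subset] by blast
  with q r show "q \<in> Z \<and> 3 \<le> card (full_branches Z)" by simp
next
  assume "q \<in> Z \<and> 3 \<le> card (full_branches Z)"
  then show "ramification_point Z q"
    using star_point_full_branches[OF full_branches_subset _ Z(2) _ Int_chart_eq_full_branches[OF Z]]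
    unfolding ramification_point_def by fastforce
qed

end

lemma openin_subset_closedin_cover:
  assumes "finite \<C>" "\<And>C. C \<in> \<C> \<Longrightarrow> closedin X C" "openin X U" "U \<noteq> {}" "U \<subseteq> \<Union>\<C>"
  shows "\<exists>C\<in>\<C>. \<exists>V. openin X V \<and> V \<noteq> {} \<and> V \<subseteq> U \<inter> C"
  using assms
proof (induction \<C> arbitrary: U rule: finite_induct)
  case empty
  then show ?case by auto
next
  case (insert C \<C>)
  show ?case
  proof (cases "U \<subseteq> C")
    case True
    then show ?thesis using insert.prems by blast
  next
    case False
    have "openin X (U - C)" using insert.prems by (intro openin_diff) auto
    moreover have "U - C \<noteq> {}" "U - C \<subseteq> \<Union>\<C>" using False insert.prems(4) by auto
    ultimately obtain C' V where "C' \<in> \<C>" "openin X V" "V \<noteq> {}" "V \<subseteq> (U - C) \<inter> C'"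
      using insert.IH insert.prems(1) by blast
    then show ?thesis by blast
  qed
qed

text \<open>Treat the elements of \<open>I\<close> one at a time, shrinking the open set to the complement of the
  membership set whenever that is nonempty.\<close>

lemma openin_subset_where_constant:
  assumes "finite I" "\<And>j. j \<in> I \<Longrightarrow> closedin X {x \<in> topspace X. j \<in> F x}" "openin X U" "U \<noteq> {}"
  shows "\<exists>V J. openin X V \<and> V \<noteq> {} \<and> V \<subseteq> U \<and> (\<forall>x\<in>V. F x \<inter> I = J)"
  using assms
proof (induction I arbitrary: U rule: finite_induct)
  case empty
  then show ?case by blast
next
  case (insert j I)
  obtain V J where V: "openin X V" "V \<noteq> {}" "V \<subseteq> U" "\<forall>x\<in>V. F x \<inter> I = J"
    using insert.IH[OF _ insert.prems(2,3)] insert.prems(1) by blast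
  let ?C = "{x \<in> topspace X. j \<in> F x}"
  show ?case
  proof (cases "V \<subseteq> ?C")
    case True
    then have "\<forall>x\<in>V. F x \<inter> insert j I = insert j J" using V(4) by blast
    then show ?thesis using V(1-3) by blast
  next
    case False
    have "openin X (V - ?C)" using V(1) insert.prems(1) by (intro openin_diff) auto
    moreover have "V - ?C \<noteq> {}" using False by blast
    moreover have "\<forall>x\<in>V - ?C. F x \<inter> insert j I = J"
      using V(4) openin_subset[OF V(1)] by blast
    ultimately show ?thesis using V(3) by blast
  qed
qed

lemma openin_open_ball_in:
  assumes "open_ball_in B V"
  shows "openin (top_of_set B) V" "V \<noteq> {}"
proof -
  obtain c r where cr: "c \<in> B" "r > 0" "V = ball c r \<inter> B" using assms unfolding open_ball_in_def by blast
  then show "openin (top_of_set B) V" by (simp add: openin_open_Int Int_commute)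
  have "c \<in> V" using cr by simp
  then show "V \<noteq> {}" by blast
qed

lemma open_ball_in_subset:
  assumes "openin (top_of_set B) U" "U \<noteq> {}"
  obtains V where "open_ball_in B V" "V \<subseteq> U"
proof -
  obtain c where c: "c \<in> U" using assms(2) by blast
  then obtain e where e: "e > 0" "ball c e \<inter> B \<subseteq> U" using assms(1) openin_contains_ball by metis
  have "c \<in> B" using c openin_imp_subset[OF assms(1)] by blast
  then show ?thesis using that e unfolding open_ball_in_def by blast
qed

section \<open>Ramification points in graphs\<close>

lemma finite_ramification_points:
  assumes "is_graph \<Gamma>"
  shows "finite {y. ramification_point \<Gamma> y}"
proof -
  obtain F where F: "finite F" "\<And>y. y \<in> \<Gamma> \<Longrightarrow> \<exists>S d h h'. star_chart \<Gamma> S d h h' y \<and> (y \<notin> F \<longrightarrow> d \<le> 2)"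
    using is_graph_local_charts[OF assms] by blast
  have "y \<in> F" if ram: "ramification_point \<Gamma> y" for y
  proof -
    obtain r where "3 \<le> r" "star_point \<Gamma> r y" "y \<in> \<Gamma>"
      using ram unfolding ramification_point_def by blast
    with F(2) show ?thesis using star_chart.star_point_le_order by fastforce
  qed
  then have "{y. ramification_point \<Gamma> y} \<subseteq> F" by blast
  then show ?thesis using F(1) by (rule finite_subset)
qed

lemma ramification_point_subset:
  assumes "is_graph \<Gamma>" "Z \<subseteq> \<Gamma>" "ramification_point Z y"
  shows "ramification_point \<Gamma> y"
proof -
  obtain r where r: "3 \<le> r" "star_point Z r y" "y \<in> Z"
    using assms(3) unfolding ramification_point_def by blast
  then have "y \<in> \<Gamma>" using assms(2) by blast
  then obtain S d and h :: "'a \<Rightarrow> complex" and h' where chart: "star_chart \<Gamma> S d h h' y"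
    using is_graph_local_charts[OF assms(1)] by metis
  then have "star_point \<Gamma> d y"
    using star_point_iff_star_chart[OF star_chart.order_pos[OF chart]] by blast
  moreover have "r \<le> d" using star_chart.star_point_le_order[OF chart r(2) assms(2)] .
  ultimately show ?thesis
    using r(1) \<open>y \<in> \<Gamma>\<close> unfolding ramification_point_def by (intro conjI exI[of _ d]) auto
qed

section \<open>Closed sets without end points in a graph bundle\<close>

locale end_free_set =
  fixes B :: "'a::metric_space set" and \<Gamma> :: "'g::metric_space set" and M :: "('a \<times> 'g) set"
  assumes subset_bundle: "M \<subseteq> B \<times> \<Gamma>" and closed_set: "closed M" and no_end_points: "End_set B M = {}"
begin

lemma fibre_subset: "fibre M b \<subseteq> \<Gamma>"
  using subset_bundle by (auto simp: fibre_def)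

lemma closed_fibre: "closed (fibre M b)"
proof -
  have "fibre M b = (\<lambda>y. (b, y)) -` M" by (auto simp: fibre_def)
  moreover have "closed ((\<lambda>y. (b, y)) -` M)"
    by (rule continuous_closed_vimage[OF closed_set]) (intro continuous_intros)
  ultimately show ?thesis by simp
qed

lemma closed_slice: "closed {b. (b, y) \<in> M}"
proof -
  have "{b. (b, y) \<in> M} = (\<lambda>b. (b, y)) -` M" by auto
  moreover have "closed ((\<lambda>b. (b, y)) -` M)"
    by (rule continuous_closed_vimage[OF closed_set]) (intro continuous_intros)
  ultimately show ?thesis by simp
qed

lemma fibre_no_end_point: "b \<in> B \<Longrightarrow> \<not> end_point (fibre M b) x"
  using no_end_points by (auto simp: End_set_def)

context
  fixes S N h h' q
  assumes chart: "star_chart \<Gamma> S N h h' q"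
begin

interpretation star_chart \<Gamma> S N h h' q by (rule chart)

lemma closed_full_branch_set: "closed {b. j \<in> full_branches (fibre M b)}"
proof (cases "j < N")
  case True
  then have "{b. j \<in> full_branches (fibre M b)} =
      (\<Inter>t\<in>{0<..<1}. {b. (b, h' (of_real t * star_dir N j)) \<in> M})"
    by (auto simp: full_branches_def fibre_def)
  then show ?thesis using closed_slice by auto
next
  case False
  then show ?thesis by (simp add: full_branches_def)
qed

lemma ramification_point_fibre_iff:
  "b \<in> B \<Longrightarrow> ramification_point (fibre M b) q \<longleftrightarrow> (b, q) \<in> M \<and> 3 \<le> card (full_branches (fibre M b))"
  using ramification_point_iff_card_full_branches[OF closed_fibre fibre_subset fibre_no_end_point]
  by (simp add: fibre_def)

lemma closedin_ramification_set: "closedin (top_of_set B) {b \<in> B. ramification_point (fibre M b) q}"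
proof -
  let ?\<J> = "{J. J \<subseteq> {..<N} \<and> 3 \<le> card J}"
  define C where "C = (\<Union>J\<in>?\<J>. \<Inter>j\<in>J. {b. j \<in> full_branches (fibre M b)})"
  have "3 \<le> card (full_branches (fibre M b)) \<longleftrightarrow> b \<in> C" for b
  proof
    assume "3 \<le> card (full_branches (fibre M b))"
    then have "full_branches (fibre M b) \<in> ?\<J>" using full_branches_subset by blast
    then show "b \<in> C" unfolding C_def by blast
  next
    assume "b \<in> C"
    then obtain J where "J \<in> ?\<J>" "b \<in> (\<Inter>j\<in>J. {b. j \<in> full_branches (fibre M b)})"
      unfolding C_def by blast
    then have "3 \<le> card J" "J \<subseteq> full_branches (fibre M b)" by auto
    moreover have "finite (full_branches (fibre M b))"
      using finite_subset[OF full_branches_subset] by blast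
    ultimately have "card J \<le> card (full_branches (fibre M b))" by (intro card_mono)
    with \<open>3 \<le> card J\<close> show "3 \<le> card (full_branches (fibre M b))" by linarith
  qed
  then have "{b \<in> B. ramification_point (fibre M b) q} = B \<inter> ({b. (b, q) \<in> M} \<inter> C)"
    using ramification_point_fibre_iff by auto
  moreover have "finite ?\<J>" by (rule finite_subset[of _ "Pow {..<N}"]) auto
  then have "closed C"
    unfolding C_def using closed_full_branch_set by (intro closed_UN closed_INT) auto
  ultimately show ?thesis using closed_slice by (simp add: closedin_closed_Int closed_Int)
qed

lemma open_ball_where_fibres_agree:
  assumes V: "open_ball_in B V" "V \<times> {q} \<subseteq> R_E B \<Gamma> M"
  shows "\<exists>J W. J \<subseteq> {..<N} \<and> card J \<ge> 3 \<and> open_ball_in B W \<and> W \<subseteq> V \<and>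
           (W \<times> S) \<inter> M = W \<times> (h' ` (\<Union>j\<in>J. star_branch N j))"
proof -
  have VB: "V \<subseteq> B" using openin_imp_subset[OF openin_open_ball_in(1)[OF V(1)]] .
  have ram: "ramification_point (fibre M b) q" if "b \<in> V" for b
    using V(2) that by (auto simp: R_E_def)
  have cl: "closedin (top_of_set B) {b \<in> topspace (top_of_set B). j \<in> full_branches (fibre M b)}" for j
  proof -
    have "{b \<in> topspace (top_of_set B). j \<in> full_branches (fibre M b)} =
        B \<inter> {b. j \<in> full_branches (fibre M b)}"
      by auto
    then show ?thesis using closedin_closed_Int[OF closed_full_branch_set] by simp
  qed
  then obtain W0 J where W0: "openin (top_of_set B) W0" "W0 \<noteq> {}" "W0 \<subseteq> V"
    and J: "\<forall>b\<in>W0. full_branches (fibre M b) \<inter> {..<N} = J"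
    using openin_subset_where_constant[of "{..<N}" "top_of_set B" "\<lambda>b. full_branches (fibre M b)",
        OF finite_lessThan cl openin_open_ball_in[OF V(1)]]
    by blast
  then have J_eq: "full_branches (fibre M b) = J" if "b \<in> W0" for b
    using that full_branches_subset by blast
  obtain W where W: "open_ball_in B W" "W \<subseteq> W0" using open_ball_in_subset[OF W0(1,2)] by blast
  then obtain b0 where "b0 \<in> W" using openin_open_ball_in(2) by blast
  then have "3 \<le> card J"
    using ram ramification_point_fibre_iff J_eq W W0(3) VB by blast
  moreover have "J \<subseteq> {..<N}" using J W0(2) by blast
  moreover have "(W \<times> S) \<inter> M = W \<times> (h' ` (\<Union>j\<in>J. star_branch N j))"
  proof -
    have "fibre M b \<inter> S = h' ` (\<Union>j\<in>J. star_branch N j)" if "b \<in> W" for b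
    proof -
      have "b \<in> V" "b \<in> B" using that W W0(3) VB by auto
      then have "q \<in> fibre M b" using ram ramification_point_def by blast
      with \<open>b \<in> B\<close> have "fibre M b \<inter> S = h' ` (\<Union>j\<in>full_branches (fibre M b). star_branch N j)"
        by (intro Int_chart_eq_full_branches closed_fibre fibre_subset fibre_no_end_point)
      moreover have "full_branches (fibre M b) = J" using J_eq that W(2) by blast
      ultimately show ?thesis by simp
    qed
    then show ?thesis by (auto simp: fibre_def)
  qed
  ultimately show ?thesis using W(1) W(2) W0(3) by blast
qed

end

lemma open_ball_ramification_at_common_point:
  assumes \<Gamma>: "is_graph \<Gamma>" and U: "open_ball_in B U" "U \<subseteq> R_B B M"
  shows "\<exists>V q. open_ball_in B V \<and> V \<subseteq> U \<and> ramification_point \<Gamma> q \<and> V \<times> {q} \<subseteq> R_E B \<Gamma> M"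
proof -
  define Q where "Q = {y. ramification_point \<Gamma> y}"
  have "finite Q" unfolding Q_def by (rule finite_ramification_points[OF \<Gamma>])
  have closedin: "closedin (top_of_set B) {b \<in> B. ramification_point (fibre M b) q}" if q: "q \<in> Q" for q
  proof -
    obtain N where N: "3 \<le> N" "star_point \<Gamma> N q"
      using q unfolding Q_def ramification_point_def by blast
    then have "1 \<le> N" by simp
    then obtain S and h :: "'g \<Rightarrow> complex" and h' where "star_chart \<Gamma> S N h h' q"
      using star_point_iff_star_chart N(2) by blast
    then show ?thesis by (rule closedin_ramification_set)
  qed
  have cover: "U \<subseteq> (\<Union>q\<in>Q. {b \<in> B. ramification_point (fibre M b) q})"
  proof
    fix b assume "b \<in> U"
    then obtain y where "b \<in> B" "ramification_point (fibre M b) y"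
      using U(2) unfolding R_B_def by blast
    moreover from this(2) have "y \<in> Q"
      unfolding Q_def by (blast intro: ramification_point_subset[OF \<Gamma> fibre_subset])
    ultimately show "b \<in> (\<Union>q\<in>Q. {b \<in> B. ramification_point (fibre M b) q})" by blast
  qed
  have "\<exists>C\<in>(\<lambda>q. {b \<in> B. ramification_point (fibre M b) q}) ` Q.
      \<exists>V. openin (top_of_set B) V \<and> V \<noteq> {} \<and> V \<subseteq> U \<inter> C"
    using \<open>finite Q\<close> closedin cover
    by (intro openin_subset_closedin_cover openin_open_ball_in[OF U(1)]) auto
  then obtain q V0 where q: "q \<in> Q" and V0: "openin (top_of_set B) V0" "V0 \<noteq> {}"
    "V0 \<subseteq> U \<inter> {b \<in> B. ramification_point (fibre M b) q}"
    by blast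
  obtain V where V: "open_ball_in B V" "V \<subseteq> V0" using open_ball_in_subset[OF V0(1,2)] by blast
  have "V \<times> {q} \<subseteq> R_E B \<Gamma> M"
    using V(2) V0(3) q ramification_point_def by (auto simp: R_E_def Q_def)
  then show ?thesis using V V0(3) q unfolding Q_def by blast
qed

end

theorem lemma15:
  fixes B :: "'a::metric_space set" and \<Gamma> :: "'g::metric_space set" and M :: "('a \<times> 'g) set"
  assumes "compact B" and "is_graph \<Gamma>"
    and "M \<subseteq> B \<times> \<Gamma>" and "closed M"
    and "End_set B M = {}"
  shows "(\<forall>U. open_ball_in B U \<and> U \<subseteq> R_B B M \<longrightarrow>
            (\<exists>V q. open_ball_in B V \<and> V \<subseteq> U \<and> ramification_point \<Gamma> q \<and> V \<times> {q} \<subseteq> R_E B \<Gamma> M))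
       \<and> (\<forall>q N V S (h :: 'g \<Rightarrow> complex) h'.
            ramification_point \<Gamma> q \<and> N \<ge> 3 \<and>
            open_ball_in B V \<and> V \<times> {q} \<subseteq> R_E B \<Gamma> M \<and>
            S \<subseteq> \<Gamma> \<and> openin (top_of_set \<Gamma>) S \<and> q \<in> S \<and>
            homeomorphism S (open_star N) h h' \<and> h q = 0
          \<longrightarrow> (\<exists>J W. J \<subseteq> {..<N} \<and> card J \<ge> 3 \<and> open_ball_in B W \<and> W \<subseteq> V \<and>
                 (W \<times> S) \<inter> M = W \<times> (h' ` (\<Union>j\<in>J. star_branch N j))))"
proof -
  interpret end_free_set B \<Gamma> M using assms(3-5) by unfold_locales
  show ?thesis
  proof (intro conjI allI impI; elim conjE)
    fix U assume "open_ball_in B U" "U \<subseteq> R_B B M"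
    then show "\<exists>V q. open_ball_in B V \<and> V \<subseteq> U \<and> ramification_point \<Gamma> q \<and> V \<times> {q} \<subseteq> R_E B \<Gamma> M"
      by (rule open_ball_ramification_at_common_point[OF assms(2)])
  next
    fix q N V S and h :: "'g \<Rightarrow> complex" and h'
    assume "N \<ge> 3" "open_ball_in B V" "V \<times> {q} \<subseteq> R_E B \<Gamma> M" "openin (top_of_set \<Gamma>) S" "q \<in> S"
      "homeomorphism S (open_star N) h h'" "h q = 0"
    then have "star_chart \<Gamma> S N h h' q" by unfold_locales auto
    then show "\<exists>J W. J \<subseteq> {..<N} \<and> card J \<ge> 3 \<and> open_ball_in B W \<and> W \<subseteq> V \<and>
        (W \<times> S) \<inter> M = W \<times> (h' ` (\<Union>j\<in>J. star_branch N j))"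
      using \<open>open_ball_in B V\<close> \<open>V \<times> {q} \<subseteq> R_E B \<Gamma> M\<close> by (rule open_ball_where_fibres_agree)
  qed
qed

end
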